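(* Let $E,F$ be vector lattices with $F$ Dedekind complete. Then for all $S,T\in\mathcal{U}_+(E,F)$ and $x\in E$, \[ (\pi_ST)x=\sup_{\varepsilon>0}\ \inf_{y\in\mathcal{F}_x,\ \rho\in\mathfrak{P}(F)}\{\rho Ty+\rho^\perp Tx:\ \rho S(x-y)\le\varepsilon Sx\}, \] \[ (\pi_S^\perp T)x=\inf_{\varepsilon>0}\ \sup_{y\in\mathcal{F}_x,\ \rho\in\mathfrak{P}(F)}\{\rho Ty:\ \rho Sy\le\varepsilon Sx\}. \]
   Context: For a vector lattice $E$, an element $z$ is a fragment of $x\in E$ if $|z|\wedge|x-z|=0$; $\mathcal{F}_x$ denotes the set of fragments of $x$. An operator $T\colon E\to F$ is orthogonally additive if $T(x+y)=Tx+Ty$ whenever $|x|\wedge|y|=0$. $\mathcal{U}(E,F)$ is the set of orthogonally additive, order bounded operators $E\to F$, ordered by $S\le T$ iff $Tx-Sx\ge0$ for all $x$; $\mathcal{U}_+(E,F)$ is its positive cone; for Dedekind complete $F$ it is a Dedekind complete vector lattice. $\mathfrak{P}(F)$ is the Boolean algebra of band projections of $F$, $\rho^\perp=I_F-\rho$. For $S\in\mathcal{U}_+(E,F)$, $\pi_S$ and $\pi_S^\perp$ denote the band projections in $\mathcal{U}(E,F)$ onto $\{S\}^{\perp\perp}$ and $\{S\}^\perp$. *)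

theory Defs
  imports Complex_Main
begin

text \<open>Dedekind completeness of F is expressed by additionally requiring the type class
  conditionally_complete_lattice (every nonempty bounded above set has a supremum,
  every nonempty bounded below set has an infimum).\<close>

class vector_lattice = ordered_real_vector + lattice

definition vabs :: "'a::vector_lattice \<Rightarrow> 'a" where
  "vabs x = sup x (- x)"

definition vdisj :: "'a::vector_lattice \<Rightarrow> 'a \<Rightarrow> bool" where
  "vdisj x y \<longleftrightarrow> inf (vabs x) (vabs y) = 0"

definition fragments :: "'a::vector_lattice \<Rightarrow> 'a set" where
  "fragments x = {z. vdisj z (x - z)}"

definition orth_additive :: "('a::vector_lattice \<Rightarrow> 'b::vector_lattice) \<Rightarrow> bool" where
  "orth_additive T \<longleftrightarrow> (\<forall>x y. vdisj x y \<longrightarrow> T (x + y) = T x + T y)"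

definition order_bounded_set :: "'a::order set \<Rightarrow> bool" where
  "order_bounded_set A \<longleftrightarrow> (\<exists>a b. A \<subseteq> {a..b})"

definition order_bounded_op :: "('a::vector_lattice \<Rightarrow> 'b::vector_lattice) \<Rightarrow> bool" where
  "order_bounded_op T \<longleftrightarrow> (\<forall>A. order_bounded_set A \<longrightarrow> order_bounded_set (T ` A))"

text \<open>The set U(E,F), ordered pointwise (S \<le> T iff Tx - Sx \<ge> 0 for all x, i.e. the function order).\<close>
definition UOp :: "('a::vector_lattice \<Rightarrow> 'b::vector_lattice) set" where
  "UOp = {T. orth_additive T \<and> order_bounded_op T}"

definition UOp_pos :: "('a::vector_lattice \<Rightarrow> 'b::vector_lattice) set" where
  "UOp_pos = {T \<in> UOp. \<forall>x. 0 \<le> T x}"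

text \<open>Lattice operations of U(E,F) are taken with respect to its own order (least upper
  bounds / greatest lower bounds inside U(E,F)), not pointwise.\<close>
definition U_is_sup :: "('a::vector_lattice \<Rightarrow> 'b::vector_lattice) \<Rightarrow> ('a \<Rightarrow> 'b) \<Rightarrow> ('a \<Rightarrow> 'b) \<Rightarrow> bool" where
  "U_is_sup f g h \<longleftrightarrow> h \<in> UOp \<and> f \<le> h \<and> g \<le> h \<and> (\<forall>k\<in>UOp. f \<le> k \<and> g \<le> k \<longrightarrow> h \<le> k)"

definition U_is_inf :: "('a::vector_lattice \<Rightarrow> 'b::vector_lattice) \<Rightarrow> ('a \<Rightarrow> 'b) \<Rightarrow> ('a \<Rightarrow> 'b) \<Rightarrow> bool" where
  "U_is_inf f g h \<longleftrightarrow> h \<in> UOp \<and> h \<le> f \<and> h \<le> g \<and> (\<forall>k\<in>UOp. k \<le> f \<and> k \<le> g \<longrightarrow> k \<le> h)"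

definition U_disj :: "('a::vector_lattice \<Rightarrow> 'b::vector_lattice) \<Rightarrow> ('a \<Rightarrow> 'b) \<Rightarrow> bool" where
  "U_disj R S \<longleftrightarrow> (\<exists>a b. U_is_sup R (\<lambda>z. - R z) a \<and> U_is_sup S (\<lambda>z. - S z) b \<and> U_is_inf a b (\<lambda>_. 0))"

definition U_perp :: "('a::vector_lattice \<Rightarrow> 'b::vector_lattice) \<Rightarrow> ('a \<Rightarrow> 'b) set" where
  "U_perp S = {R \<in> UOp. U_disj R S}"

definition U_perpperp :: "('a::vector_lattice \<Rightarrow> 'b::vector_lattice) \<Rightarrow> ('a \<Rightarrow> 'b) set" where
  "U_perpperp S = {R \<in> UOp. \<forall>Q\<in>U_perp S. U_disj R Q}"

definition pi_S :: "('a::vector_lattice \<Rightarrow> 'b::vector_lattice) \<Rightarrow> ('a \<Rightarrow> 'b) \<Rightarrow> ('a \<Rightarrow> 'b)" where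
  "pi_S S T = (THE P. P \<in> U_perpperp S \<and> (\<lambda>z. T z - P z) \<in> U_perp S)"

definition pi_S_perp :: "('a::vector_lattice \<Rightarrow> 'b::vector_lattice) \<Rightarrow> ('a \<Rightarrow> 'b) \<Rightarrow> ('a \<Rightarrow> 'b)" where
  "pi_S_perp S T = (THE P. P \<in> U_perp S \<and> (\<lambda>z. T z - P z) \<in> U_perpperp S)"

definition vdcomp :: "'a::vector_lattice set \<Rightarrow> 'a set" where
  "vdcomp B = {x. \<forall>b\<in>B. vdisj x b}"

definition is_band :: "'a::vector_lattice set \<Rightarrow> bool" where
  "is_band B \<longleftrightarrow> 0 \<in> B \<and> (\<forall>x\<in>B. \<forall>y\<in>B. x + y \<in> B) \<and> (\<forall>c. \<forall>x\<in>B. c *\<^sub>R x \<in> B)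
     \<and> (\<forall>x\<in>B. \<forall>y. vabs y \<le> vabs x \<longrightarrow> y \<in> B)
     \<and> (\<forall>A x. A \<subseteq> B \<longrightarrow> (\<forall>a\<in>A. a \<le> x) \<longrightarrow> (\<forall>z. (\<forall>a\<in>A. a \<le> z) \<longrightarrow> x \<le> z) \<longrightarrow> x \<in> B)"

definition is_projection_band :: "'a::vector_lattice set \<Rightarrow> bool" where
  "is_projection_band B \<longleftrightarrow> is_band B \<and> (\<forall>x. \<exists>b\<in>B. \<exists>c\<in>vdcomp B. x = b + c)"

definition band_projections :: "('a::vector_lattice \<Rightarrow> 'a) set" where
  "band_projections = {\<rho>. \<exists>B. is_projection_band B \<and> (\<forall>x. \<rho> x \<in> B \<and> x - \<rho> x \<in> vdcomp B)}"

end

theory Submission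
  imports Defs "HOL-Library.Lattice_Algebras"
begin

text \<open>
  Let \<open>P = sup\<^sub>n (T \<and> n S)\<close>, the infima taken in \<open>\<U>(E,F)\<close>, where they are given by
  \<open>(R\<^sub>1 \<and> R\<^sub>2) x = inf {R\<^sub>1 y + R\<^sub>2 (x - y) | y \<in> \<F>\<^sub>x}\<close> (the Riesz decomposition of
  fragments of disjoint sums makes this orthogonally additive). Then \<open>P\<close> is disjoint from
  \<open>{S}\<^sup>\<perp>\<close> and \<open>(T - P) \<and> S = 0\<close>, so \<open>P = \<pi>\<^sub>S T\<close> and \<open>T - P = \<pi>\<^sub>S\<^sup>\<perp> T\<close>.

  If \<open>y\<close> is a fragment of \<open>x\<close> and \<open>\<rho> S (x - y) \<le> \<epsilon> S x\<close>, then the admissible value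
  \<open>\<rho> T y + \<rho>\<^sup>\<perp> T x = T x - \<rho> T (x - y)\<close> is at least \<open>(T \<and> n S) x - n \<epsilon> S x\<close>, so
  \<open>P x\<close> is below the supremum over \<open>\<epsilon>\<close> of the infima. Conversely, let \<open>b\<close> be the
  positive part of the excess of such an infimum over \<open>P x\<close>. Projecting onto the band where
  \<open>\<epsilon> S x\<close> dominates \<open>S (x - y)\<close> gives \<open>\<epsilon>/(1+\<epsilon>) (b \<and> S x) \<le> (T - P) y + S (x - y)\<close>
  for all fragments \<open>y\<close>; the infimum of the right-hand side is \<open>((T - P) \<and> S) x = 0\<close>, hence
  \<open>b \<perp> S x\<close>, and the projection annihilating \<open>S x\<close> then yields \<open>b \<le> 0\<close>. The formula for
  \<open>\<pi>\<^sub>S\<^sup>\<perp> T\<close> is the first one reflected by \<open>v \<mapsto> T x - v\<close>, replacing \<open>y\<close> by \<open>x - y\<close>.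
\<close>

instance vector_lattice \<subseteq> lattice_ab_group_add ..

lemma inf_add_nonneg_le:
  fixes a c d :: "'a::lattice_ab_group_add"
  assumes "0 \<le> d"
  shows "inf a (c + d) \<le> inf a c + d"
proof -
  have "inf a (c + d) \<le> inf (a + d) (c + d)"
    using assms by (meson add_increasing2 inf_mono order_refl)
  also have "\<dots> = inf a c + d" by (simp add: add_inf_distrib_right)
  finally show ?thesis .
qed

lemma inf_add_le_add_inf:
  fixes a b c :: "'a::lattice_ab_group_add"
  assumes "0 \<le> a" "0 \<le> b" "0 \<le> c"
  shows "inf a (b + c) \<le> inf a b + inf a c"
proof -
  have "inf a b + inf a c = inf (a + inf a c) (b + inf a c)" by (simp add: add_inf_distrib_right)
  moreover have "inf a (b + c) \<le> a + inf a c"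
    using assms by (meson add_increasing2 inf_le1 le_infI order.trans)
  moreover have "b + inf a c = inf (b + a) (b + c)" by (simp add: add_inf_distrib_left)
  moreover have "inf a (b + c) \<le> inf (b + a) (b + c)"
    using assms by (simp add: le_infI1 add_increasing)
  ultimately show ?thesis by simp
qed

lemma add_eq_sup_if_inf_eq_0:
  fixes a b :: "'a::lattice_ab_group_add"
  shows "inf a b = 0 \<Longrightarrow> a + b = sup a b"
  using add_eq_inf_sup[of a b] by simp

lemma inf_add_eq_0:
  fixes a b c :: "'a::lattice_ab_group_add"
  assumes "0 \<le> a" "0 \<le> b" "0 \<le> c" "inf a c = 0" "inf b c = 0"
  shows "inf (a + b) c = 0"
proof -
  have "inf c (a + b) \<le> inf c a + inf c b" using assms by (intro inf_add_le_add_inf) auto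
  also have "\<dots> = 0" using assms by (simp add: inf_commute)
  finally show ?thesis using assms by (intro order_antisym) (auto simp: inf_commute)
qed

lemma le_of_le_add_disjoint:
  fixes a b c :: "'a::lattice_ab_group_add"
  assumes "0 \<le> a" "0 \<le> b" "0 \<le> c" "inf a c = 0" "a \<le> b + c"
  shows "a \<le> b"
proof -
  have "a = inf a (b + c)" using assms by (simp add: inf_absorb1)
  also have "\<dots> \<le> inf a b + inf a c" by (rule inf_add_le_add_inf) (use assms in auto)
  also have "\<dots> = inf a b" using assms by simp
  finally show ?thesis by simp
qed

lemma riesz_decomposition_disjoint:
  fixes a e f :: "'a::lattice_ab_group_add"
  assumes "0 \<le> a" "0 \<le> e" "0 \<le> f" "inf e f = 0" "a \<le> e + f"
  shows "a = inf a e + inf a f"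
proof (rule order_antisym)
  have "a = inf a (e + f)" using assms by (simp add: inf_absorb1)
  also have "\<dots> \<le> inf a e + inf a f" using assms by (intro inf_add_le_add_inf)
  finally show "a \<le> inf a e + inf a f" .
  have "inf (inf a e) (inf a f) = 0"
    using assms(1-4) by (intro order_antisym) (simp_all, metis inf_le2 inf_mono)
  hence "inf a e + inf a f = sup (inf a e) (inf a f)" by (rule add_eq_sup_if_inf_eq_0)
  also have "\<dots> \<le> a" by simp
  finally show "inf a e + inf a f \<le> a" .
qed

lemma pprt_split: "x = pprt x - pprt (- (x::'a::lattice_ab_group_add))"
  by (metis diff_minus_eq_add pprt_neg prts)

lemma vabs_ge: "x \<le> vabs x" by (simp add: vabs_def)

lemma vabs_ge_neg: "- x \<le> vabs x" by (simp add: vabs_def)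

lemma vabs_nonneg: "0 \<le> vabs x"
proof -
  have "x + (- x) \<le> vabs x + vabs x" by (intro add_mono vabs_ge vabs_ge_neg)
  thus ?thesis by simp
qed

lemma vabs_least: "x \<le> c \<Longrightarrow> - x \<le> c \<Longrightarrow> vabs x \<le> c"
  by (simp add: vabs_def)

lemma vabs_pos: "0 \<le> x \<Longrightarrow> vabs x = x"
  unfolding vabs_def by (rule sup_absorb1) (meson dual_order.trans neg_le_0_iff_le)

lemma vabs_minus: "vabs (- x) = vabs x"
  by (simp add: vabs_def sup_commute)

lemma vabs_eq_0_iff: "vabs x = 0 \<longleftrightarrow> x = 0"
  by (simp add: vabs_def)

lemma vabs_add: "vabs (a + b) \<le> vabs a + vabs b"
proof (rule vabs_least)
  show "a + b \<le> vabs a + vabs b" by (intro add_mono vabs_ge)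
  have "- a + - b \<le> vabs a + vabs b" by (intro add_mono vabs_ge_neg)
  thus "- (a + b) \<le> vabs a + vabs b" by (simp add: add.commute)
qed

lemma vabs_diff: "vabs (a - b) \<le> vabs a + vabs b"
  using vabs_add[of a "- b"] by (simp add: vabs_minus)

lemma pprt_le_vabs: "pprt x \<le> vabs x"
  by (simp add: pprt_def vabs_def le_supI1 vabs_nonneg[unfolded vabs_def])

lemma pprt_neg_le_vabs: "pprt (- x) \<le> vabs x"
  using pprt_le_vabs[of "- x"] by (simp add: vabs_minus)


lemma scaleR_sup_nonneg:
  fixes a b :: "'a::vector_lattice"
  assumes c: "0 \<le> c"
  shows "c *\<^sub>R sup a b = sup (c *\<^sub>R a) (c *\<^sub>R b)"
proof (rule order_antisym)
  show "sup (c *\<^sub>R a) (c *\<^sub>R b) \<le> c *\<^sub>R sup a b"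
    using c by (simp add: scaleR_left_mono)
  show "c *\<^sub>R sup a b \<le> sup (c *\<^sub>R a) (c *\<^sub>R b)"
  proof (cases "c = 0")
    case False
    hence cp: "0 < c" using c by simp
    have "a = inverse c *\<^sub>R (c *\<^sub>R a)" "b = inverse c *\<^sub>R (c *\<^sub>R b)" using cp by simp_all
    hence "a \<le> inverse c *\<^sub>R sup (c *\<^sub>R a) (c *\<^sub>R b)" "b \<le> inverse c *\<^sub>R sup (c *\<^sub>R a) (c *\<^sub>R b)"
      using cp
      by (metis inf_sup_ord(3,4) inverse_nonnegative_iff_nonnegative less_imp_le scaleR_left_mono)+
    hence "sup a b \<le> inverse c *\<^sub>R sup (c *\<^sub>R a) (c *\<^sub>R b)" by simp
    hence "c *\<^sub>R sup a b \<le> c *\<^sub>R (inverse c *\<^sub>R sup (c *\<^sub>R a) (c *\<^sub>R b))"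
      using c by (rule scaleR_left_mono)
    thus ?thesis using cp by simp
  qed simp
qed

lemma scaleR_inf_nonneg:
  fixes a b :: "'a::vector_lattice"
  assumes "0 \<le> c"
  shows "c *\<^sub>R inf a b = inf (c *\<^sub>R a) (c *\<^sub>R b)"
proof -
  have "c *\<^sub>R inf a b = - (c *\<^sub>R sup (- a) (- b))"
    by (subst inf_eq_neg_sup) (rule scaleR_minus_right)
  also have "\<dots> = - sup (- (c *\<^sub>R a)) (- (c *\<^sub>R b))"
    by (simp only: scaleR_sup_nonneg[OF assms] scaleR_minus_right)
  also have "\<dots> = inf (c *\<^sub>R a) (c *\<^sub>R b)" by (rule inf_eq_neg_sup[symmetric])
  finally show ?thesis .
qed

lemma vabs_scaleR: "vabs (c *\<^sub>R x) = \<bar>c\<bar> *\<^sub>R vabs x"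
proof (cases "0 \<le> c")
  case True thus ?thesis using scaleR_sup_nonneg[OF True, of x "- x"] by (simp add: vabs_def)
next
  case False
  hence "c *\<^sub>R x = (- c) *\<^sub>R (- x)" "0 \<le> - c" by simp_all
  thus ?thesis using scaleR_sup_nonneg[of "- c" "- x" x] False by (simp add: vabs_def sup_commute)
qed

lemma inf_scaleR_eq_0:
  fixes a b :: "'a::vector_lattice"
  assumes "0 \<le> a" "0 \<le> b" "inf a b = 0" "0 \<le> t"
  shows "inf (t *\<^sub>R a) b = 0"
proof (rule order_antisym)
  define M where "M = max t 1"
  have "inf (t *\<^sub>R a) b \<le> inf (M *\<^sub>R a) (M *\<^sub>R b)"
  proof (rule inf_mono)
    show "t *\<^sub>R a \<le> M *\<^sub>R a" using assms by (intro scaleR_right_mono) (auto simp: M_def)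
    show "b \<le> M *\<^sub>R b" using assms scaleR_right_mono[of 1 M b] by (simp add: M_def)
  qed
  also have "\<dots> = M *\<^sub>R inf a b" by (rule scaleR_inf_nonneg[symmetric]) (simp add: M_def)
  finally show "inf (t *\<^sub>R a) b \<le> 0" using assms by simp
qed (use assms in \<open>auto intro: scaleR_nonneg_nonneg\<close>)

lemma vdisj_sym: "vdisj x y \<longleftrightarrow> vdisj y x"
  by (simp add: vdisj_def inf_commute)

lemma vdisj_nonneg_iff: "0 \<le> a \<Longrightarrow> 0 \<le> b \<Longrightarrow> vdisj a b \<longleftrightarrow> inf a b = 0"
  by (simp add: vdisj_def vabs_pos)

lemma vdisj_0: "vdisj 0 y"
  by (simp add: vdisj_def vabs_nonneg inf_absorb1 vabs_pos)

lemma vdisj_self_eq_0: "vdisj x x \<Longrightarrow> x = 0"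
  by (simp add: vdisj_def vabs_eq_0_iff)

lemma vdisj_vabs_mono:
  assumes "vdisj a b" "vabs a' \<le> vabs a" "vabs b' \<le> vabs b"
  shows "vdisj a' b'"
proof -
  have "inf (vabs a') (vabs b') \<le> inf (vabs a) (vabs b)" using assms by (intro inf_mono)
  thus ?thesis using assms unfolding vdisj_def by (intro order_antisym) (auto simp: vabs_nonneg)
qed

lemma vdisj_add:
  assumes "vdisj a c" "vdisj b c"
  shows "vdisj (a + b) c"
proof -
  have "inf (vabs a + vabs b) (vabs c) = 0"
    using assms unfolding vdisj_def by (intro inf_add_eq_0 vabs_nonneg) auto
  hence "vdisj (vabs a + vabs b) c"
    by (simp add: vdisj_def vabs_pos add_nonneg_nonneg vabs_nonneg)
  thus ?thesis
    by (rule vdisj_vabs_mono) (simp_all add: vabs_add vabs_pos add_nonneg_nonneg vabs_nonneg)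
qed

lemma vdisj_minus: "vdisj (- a) c \<longleftrightarrow> vdisj a c"
  by (simp add: vdisj_def vabs_minus)

lemma vdisj_diff: "vdisj a c \<Longrightarrow> vdisj b c \<Longrightarrow> vdisj (a - b) c"
  using vdisj_add[of a c "- b"] by (simp add: vdisj_minus)

lemma vdisj_scaleR: "vdisj x y \<Longrightarrow> vdisj (c *\<^sub>R x) y"
  unfolding vdisj_def vabs_scaleR by (intro inf_scaleR_eq_0 vabs_nonneg) auto

lemma vdisj_pprt_pprt_neg: "vdisj (pprt x) (pprt (- x))"
proof -
  have "pprt x = pprt (- x) + x"
    unfolding pprt_def by (simp add: add_sup_distrib_left sup.commute add.commute)
  hence "inf (pprt x) (pprt (- x)) = inf (pprt (- x) + x) (pprt (- x) + 0)" by simp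
  also have "\<dots> = pprt (- x) + inf x 0" by (rule add_inf_distrib_left[symmetric])
  also have "inf x 0 = - pprt (- x)" unfolding pprt_def using inf_eq_neg_sup[of x 0] by simp
  finally show ?thesis by (simp add: vdisj_nonneg_iff)
qed

subsection \<open>Fragments\<close>

lemma fragments_0: "0 \<in> fragments x"
  by (simp add: fragments_def vdisj_0)

lemma fragments_self: "x \<in> fragments x"
  by (simp add: fragments_def vdisj_sym vdisj_0)

lemma fragments_compl: "y \<in> fragments x \<Longrightarrow> x - y \<in> fragments x"
  by (simp add: fragments_def vdisj_sym)

lemma fragments_uminus: "y \<in> fragments x \<Longrightarrow> - y \<in> fragments (- x)"
proof -
  assume "y \<in> fragments x"
  moreover have "- x - - y = - (x - y)" by simp
  ultimately show ?thesis unfolding fragments_def vdisj_def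
    by (simp only: mem_Collect_eq vabs_minus)
qed

lemma fragments_le_vabs:
  assumes "y \<in> fragments x"
  shows "y \<le> vabs x"
proof -
  define w where "w = x - y"
  have d: "inf (vabs y) (vabs w) = 0" using assms by (simp add: fragments_def vdisj_def w_def)
  have "y = x + (- w)" by (simp add: w_def)
  also have "\<dots> \<le> pprt x + pprt (- w)" by (intro add_mono) (simp_all add: pprt_def)
  finally have "pprt y \<le> pprt x + pprt (- w)" by (simp add: pprt_def add_nonneg_nonneg)
  moreover have "inf (pprt y) (pprt (- w)) = 0"
    using d inf_mono[OF pprt_le_vabs[of y] pprt_neg_le_vabs[of w]]
    by (intro order_antisym) simp_all
  ultimately have "pprt y \<le> pprt x"
    by (intro le_of_le_add_disjoint[OF zero_le_pprt zero_le_pprt zero_le_pprt])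
  hence "pprt y \<le> vabs x" using pprt_le_vabs order.trans by blast
  thus ?thesis by (simp add: pprt_def)
qed

lemma fragments_vabs_le:
  assumes "y \<in> fragments x"
  shows "vabs y \<le> vabs x"
proof (rule vabs_least)
  show "y \<le> vabs x" using assms by (rule fragments_le_vabs)
  show "- y \<le> vabs x" using fragments_le_vabs[OF fragments_uminus[OF assms]]
    by (simp add: vabs_minus)
qed

lemma fragments_add_disjoint:
  assumes "vdisj x z" "y1 \<in> fragments x" "y2 \<in> fragments z"
  shows "y1 + y2 \<in> fragments (x + z)" "vdisj y1 y2" "vdisj (x - y1) (z - y2)"
proof -
  have le: "vabs y1 \<le> vabs x" "vabs y2 \<le> vabs z" "vabs (x - y1) \<le> vabs x" "vabs (z - y2) \<le> vabs z"
    using assms by (auto intro: fragments_vabs_le fragments_compl)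
  show "vdisj y1 y2" by (rule vdisj_vabs_mono[OF assms(1) le(1,2)])
  show "vdisj (x - y1) (z - y2)" by (rule vdisj_vabs_mono[OF assms(1) le(3,4)])
  have "vdisj y1 (x - y1)" "vdisj y2 (z - y2)" using assms by (simp_all add: fragments_def)
  moreover have "vdisj y1 (z - y2)" "vdisj y2 (x - y1)"
    using vdisj_vabs_mono[OF assms(1) le(1,4)] vdisj_vabs_mono[OF assms(1) le(3,2)]
    by (simp_all add: vdisj_sym)
  ultimately have "vdisj ((x - y1) + (z - y2)) y1" "vdisj ((x - y1) + (z - y2)) y2"
    by (metis vdisj_sym vdisj_add)+
  hence "vdisj (y1 + y2) ((x - y1) + (z - y2))" by (metis vdisj_add vdisj_sym)
  thus "y1 + y2 \<in> fragments (x + z)" by (simp add: fragments_def add_diff_add)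
qed

lemma decompose_along_disjoint:
  assumes "vdisj x z" "vabs y \<le> vabs x + vabs z"
  shows "y = (inf (pprt y) (vabs x) - inf (pprt (- y)) (vabs x))
           + (inf (pprt y) (vabs z) - inf (pprt (- y)) (vabs z))"
proof -
  have ef: "inf (vabs x) (vabs z) = 0" using assms(1) by (simp add: vdisj_def)
  have "pprt y \<le> vabs x + vabs z" "pprt (- y) \<le> vabs x + vabs z"
    using assms(2) pprt_le_vabs[of y] pprt_neg_le_vabs[of y] by (auto intro: order.trans)
  hence "pprt y = inf (pprt y) (vabs x) + inf (pprt y) (vabs z)"
    "pprt (- y) = inf (pprt (- y)) (vabs x) + inf (pprt (- y)) (vabs z)"
    using ef by (auto intro!: riesz_decomposition_disjoint vabs_nonneg)
  thus ?thesis using pprt_split[of y] by (metis add_diff_add)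
qed

lemma fragment_component_of_disjoint_sum:
  assumes xz: "vdisj x z" and y: "y \<in> fragments (x + z)"
  shows "inf (pprt y) (vabs x) - inf (pprt (- y)) (vabs x) \<in> fragments x"
proof -
  define p n e f where "p = pprt y" "n = pprt (- y)" "e = vabs x" "f = vabs z"
  define w where "w = x + z - y"
  define y1 y2 where "y1 = inf p e - inf n e" "y2 = inf p f - inf n f"
  define K L where "K = inf p e + inf n e" "L = inf p f + inf n f"
  have nonneg: "0 \<le> p" "0 \<le> n" "0 \<le> e" "0 \<le> f"
    by (simp_all add: p_n_e_f_def vabs_nonneg)
  hence inf_nonneg: "0 \<le> inf p e" "0 \<le> inf n e" "0 \<le> inf p f" "0 \<le> inf n f" by simp_all
  have "vabs y \<le> e + f"
    using order.trans[OF fragments_vabs_le[OF y] vabs_add] by (simp add: p_n_e_f_def)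
  hence "y = y1 + y2"
    using decompose_along_disjoint[OF xz] by (simp add: p_n_e_f_def y1_y2_def)
  \<comment> \<open>\<open>x - y1 = (w - z) + y2\<close>, and \<open>K \<ge> \<bar>y1\<bar>\<close> is disjoint from \<open>w\<close> (as \<open>y \<perp> w\<close>),
    from \<open>z\<close>, and from \<open>L \<ge> \<bar>y2\<bar>\<close>\<close>
  hence "x - y1 = (w + - z) + y2" by (simp add: w_def algebra_simps)
  hence "vabs (x - y1) \<le> vabs (w + - z) + vabs y2" by (simp only: vabs_add)
  also have "\<dots> \<le> (vabs w + vabs (- z)) + L"
    using vabs_diff[of "inf p f" "inf n f"] inf_nonneg
    by (intro add_mono vabs_add) (simp_all add: y1_y2_def K_L_def vabs_pos)
  finally have "vabs (x - y1) \<le> (vabs w + f) + L" by (simp add: vabs_minus p_n_e_f_def)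
  moreover have "vabs y1 \<le> K"
    using vabs_diff[of "inf p e" "inf n e"] inf_nonneg by (simp add: y1_y2_def K_L_def vabs_pos)
  moreover have "vdisj K (vabs w)"
  proof -
    have "vdisj y w" using y by (simp add: fragments_def w_def)
    hence "vdisj (inf p e) w" "vdisj (inf n e) w"
      using vdisj_vabs_mono[of y w "inf p e" w] vdisj_vabs_mono[of y w "inf n e" w]
        inf_nonneg pprt_le_vabs[of y] pprt_neg_le_vabs[of y]
      by (auto simp: vabs_pos p_n_e_f_def intro: order.trans[OF inf_le1])
    thus ?thesis unfolding K_L_def by (metis vdisj_add vdisj_def vabs_nonneg vabs_pos)
  qed
  moreover have Kf: "vdisj K f"
  proof -
    have "vdisj (inf p e) f" "vdisj (inf n e) f"
      using vdisj_vabs_mono[OF xz, of "inf p e" f] vdisj_vabs_mono[OF xz, of "inf n e" f] nonneg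
      by (auto simp: vabs_pos p_n_e_f_def)
    thus ?thesis unfolding K_L_def by (rule vdisj_add)
  qed
  moreover have "vdisj K L"
  proof -
    have "vdisj K (inf p f)" "vdisj K (inf n f)"
      using vdisj_vabs_mono[OF Kf, of K "inf p f"] vdisj_vabs_mono[OF Kf, of K "inf n f"] nonneg
      by (auto simp: vabs_pos)
    thus ?thesis unfolding K_L_def by (metis vdisj_sym vdisj_add)
  qed
  ultimately have "vdisj K ((vabs w + f) + L)" by (metis vdisj_sym vdisj_add)
  moreover have "0 \<le> K" "0 \<le> (vabs w + f) + L"
    using inf_nonneg nonneg vabs_nonneg[of w] by (simp_all add: K_L_def)
  ultimately show ?thesis
    using \<open>vabs y1 \<le> K\<close> \<open>vabs (x - y1) \<le> (vabs w + f) + L\<close>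
    by (auto simp: fragments_def y1_y2_def p_n_e_f_def vabs_pos intro: vdisj_vabs_mono)
qed

lemma fragments_of_disjoint_sum:
  assumes "vdisj x z" "y \<in> fragments (x + z)"
  obtains y1 y2 where "y1 \<in> fragments x" "y2 \<in> fragments z" "y = y1 + y2"
proof -
  have "vdisj z x" "y \<in> fragments (z + x)" using assms by (simp_all add: vdisj_sym add.commute)
  thus ?thesis
    using that fragment_component_of_disjoint_sum[OF assms] fragment_component_of_disjoint_sum
      decompose_along_disjoint[OF assms(1) order.trans[OF fragments_vabs_le[OF assms(2)] vabs_add]]
    by blast
qed

lemma vdcomp_0: "0 \<in> vdcomp B"
  by (simp add: vdcomp_def vdisj_0)

lemma vdcomp_add: "x \<in> vdcomp B \<Longrightarrow> y \<in> vdcomp B \<Longrightarrow> x + y \<in> vdcomp B"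
  by (simp add: vdcomp_def vdisj_add)

lemma vdcomp_diff: "x \<in> vdcomp B \<Longrightarrow> y \<in> vdcomp B \<Longrightarrow> x - y \<in> vdcomp B"
  by (simp add: vdcomp_def vdisj_diff)

lemma vdcomp_scaleR: "x \<in> vdcomp B \<Longrightarrow> c *\<^sub>R x \<in> vdcomp B"
  by (simp add: vdcomp_def vdisj_scaleR)

lemma vdcomp_solid: "x \<in> vdcomp B \<Longrightarrow> vabs y \<le> vabs x \<Longrightarrow> y \<in> vdcomp B"
  unfolding vdcomp_def by (auto intro: vdisj_vabs_mono)

lemma le_diff_inf_vabs_if_vdisj:
  assumes "0 \<le> q" "a \<le> q" "vdisj a d"
  shows "a \<le> q - inf q (vabs d)"
proof -
  define m where "m = inf q (vabs d)"
  have "vdisj (pprt a) d"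
    using vdisj_vabs_mono[OF assms(3), of "pprt a" d] pprt_le_vabs[of a] by (simp add: vabs_pos)
  hence "inf (pprt a) (vabs d) = 0" by (simp add: vdisj_def vabs_pos)
  moreover have "inf (pprt a) m \<le> inf (pprt a) (vabs d)" by (simp add: m_def le_infI2)
  moreover have "0 \<le> m" using assms(1) vabs_nonneg[of d] by (simp add: m_def)
  ultimately have "inf (pprt a) m = 0" by (intro order_antisym) simp_all
  hence "pprt a + m = sup (pprt a) m" by (rule add_eq_sup_if_inf_eq_0)
  also have "\<dots> \<le> q" using assms(1,2) by (simp add: m_def pprt_def)
  finally have "pprt a \<le> q - m" by (simp add: le_diff_eq)
  thus ?thesis by (simp add: m_def pprt_def)
qed

lemma vdcomp_closed_Sup:
  assumes A: "A \<subseteq> vdcomp D" and ub: "\<forall>a\<in>A. a \<le> x"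
    and least: "\<forall>z. (\<forall>a\<in>A. a \<le> z) \<longrightarrow> x \<le> z"
  shows "x \<in> vdcomp D"
proof (cases "A = {}")
  case True
  hence "x \<le> 0" "x \<le> x + x" using least by blast+
  hence "x = 0" by simp
  thus ?thesis by (simp add: vdcomp_0)
next
  case False
  then obtain a0 where a0: "a0 \<in> A" by auto
  \<comment> \<open>shifting by \<open>a0\<close> reduces to a positive supremum \<open>q\<close>; if \<open>q \<and> |d| > 0\<close>, then
    \<open>x - q \<and> |d|\<close> would be a smaller upper bound of \<open>A\<close>\<close>
  define q where "q = x - a0"
  have "q \<in> vdcomp D"
    unfolding vdcomp_def mem_Collect_eq
  proof
    fix d assume d: "d \<in> D"
    have "a - a0 \<le> q - inf q (vabs d)" if a: "a \<in> A" for a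
      using ub a a0 vdcomp_diff[of a D a0] A d
      by (intro le_diff_inf_vabs_if_vdisj) (auto simp: q_def vdcomp_def)
    hence "\<forall>a\<in>A. a \<le> x - inf q (vabs d)" by (simp add: q_def algebra_simps)
    hence "x \<le> x - inf q (vabs d)" using least by blast
    moreover have "0 \<le> inf q (vabs d)" using ub a0 vabs_nonneg[of d] by (simp add: q_def)
    ultimately have "inf q (vabs d) = 0" by (metis le_diff_eq add_le_same_cancel1 order_antisym)
    thus "vdisj q d" using ub a0 by (simp add: vdisj_def vabs_pos q_def)
  qed
  thus ?thesis using vdcomp_add[of q D a0] A a0 by (auto simp: q_def)
qed

lemma is_band_vdcomp: "is_band (vdcomp D)"
  unfolding is_band_def
proof (intro conjI ballI allI impI)
  fix A x assume "A \<subseteq> vdcomp D" "\<forall>a\<in>A. a \<le> x" "\<forall>z. (\<forall>a\<in>A. a \<le> z) \<longrightarrow> x \<le> z"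
  thus "x \<in> vdcomp D" by (rule vdcomp_closed_Sup)
qed (simp_all add: vdcomp_0 vdcomp_add vdcomp_scaleR vdcomp_solid)

lemma is_bandD:
  assumes "is_band B"
  shows "0 \<in> B" "x \<in> B \<Longrightarrow> y \<in> B \<Longrightarrow> x + y \<in> B" "x \<in> B \<Longrightarrow> c *\<^sub>R x \<in> B"
    and is_band_diff: "x \<in> B \<Longrightarrow> y \<in> B \<Longrightarrow> x - y \<in> B"
proof -
  show "0 \<in> B" "x \<in> B \<Longrightarrow> y \<in> B \<Longrightarrow> x + y \<in> B" "x \<in> B \<Longrightarrow> c *\<^sub>R x \<in> B" for x y c
    using assms by (simp_all add: is_band_def)
  thus "x \<in> B \<Longrightarrow> y \<in> B \<Longrightarrow> x - y \<in> B"
    using scaleR_minus1_left[of y] by (metis diff_conv_add_uminus)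
qed

lemma band_projection_unique:
  assumes B: "is_band B" and \<rho>: "\<forall>x. \<rho> x \<in> B \<and> x - \<rho> x \<in> vdcomp B"
    and "b \<in> B" "c \<in> vdcomp B"
  shows "\<rho> (b + c) = b"
proof -
  define d where "d = \<rho> (b + c) - b"
  have "d \<in> B" unfolding d_def using \<rho> assms(3) is_bandD[OF B] by blast
  moreover have "d = c - ((b + c) - \<rho> (b + c))" by (simp add: d_def algebra_simps)
  hence "d \<in> vdcomp B" using \<rho> assms(4) vdcomp_diff by metis
  ultimately have "vdisj d d" by (simp add: vdcomp_def)
  hence "d = 0" by (rule vdisj_self_eq_0)
  thus ?thesis by (simp add: d_def)
qed

lemma band_projectionsE:
  assumes "\<rho> \<in> band_projections"
  obtains B where "is_band B" "\<forall>x. \<rho> x \<in> B \<and> x - \<rho> x \<in> vdcomp B"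
  using assms by (auto simp: band_projections_def is_projection_band_def)

lemma nonneg_if_vdisj_add_nonneg:
  assumes "vdisj b c" "0 \<le> b + c"
  shows "0 \<le> b"
proof -
  have "- b \<le> c" using add_right_mono[OF assms(2), of "- b"] by simp
  hence "pprt (- b) \<le> inf (vabs b) (vabs c)"
    using vabs_ge[of c] vabs_nonneg[of c] pprt_neg_le_vabs[of b] by (simp add: pprt_def)
  hence "pprt (- b) \<le> 0" using assms(1) by (metis vdisj_def)
  thus ?thesis by (simp add: pprt_def)
qed

lemma band_projection_props:
  assumes "\<rho> \<in> band_projections"
  shows band_projection_add: "\<rho> (x + y) = \<rho> x + \<rho> y"
    and band_projection_scaleR: "\<rho> (c *\<^sub>R x) = c *\<^sub>R \<rho> x"
    and band_projection_idem: "\<rho> (\<rho> x) = \<rho> x"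
    and band_projection_compl: "\<rho> (x - \<rho> x) = 0"
    and band_projection_nonneg: "0 \<le> x \<Longrightarrow> 0 \<le> \<rho> x"
    and band_projection_le: "0 \<le> x \<Longrightarrow> \<rho> x \<le> x"
proof -
  obtain B where B: "is_band B" and \<rho>: "\<forall>x. \<rho> x \<in> B \<and> x - \<rho> x \<in> vdcomp B"
    using assms by (rule band_projectionsE)
  note unique = band_projection_unique[OF B \<rho>]
  have "\<rho> (\<rho> x + \<rho> y + ((x - \<rho> x) + (y - \<rho> y))) = \<rho> x + \<rho> y"
    using \<rho> by (intro unique is_bandD[OF B] vdcomp_add) auto
  thus "\<rho> (x + y) = \<rho> x + \<rho> y" by (simp add: algebra_simps)
  have "\<rho> (c *\<^sub>R \<rho> x + c *\<^sub>R (x - \<rho> x)) = c *\<^sub>R \<rho> x"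
    using \<rho> by (intro unique is_bandD[OF B] vdcomp_scaleR) auto
  thus "\<rho> (c *\<^sub>R x) = c *\<^sub>R \<rho> x" by (simp add: algebra_simps)
  show "\<rho> (\<rho> x) = \<rho> x" using unique[of "\<rho> x" 0] \<rho> vdcomp_0[of B] by simp
  show "\<rho> (x - \<rho> x) = 0" using unique[of 0 "x - \<rho> x"] \<rho> is_bandD(1)[OF B] by simp
  have d: "vdisj (\<rho> x) (x - \<rho> x)" using \<rho> by (simp add: vdcomp_def vdisj_sym)
  assume "0 \<le> x"
  thus "0 \<le> \<rho> x" using nonneg_if_vdisj_add_nonneg[OF d] by simp
  have "0 \<le> x - \<rho> x"
    using nonneg_if_vdisj_add_nonneg[OF d[unfolded vdisj_sym[of "\<rho> x"]]] \<open>0 \<le> x\<close> by simp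
  thus "\<rho> x \<le> x" by simp
qed

lemma band_projection_diff: "\<rho> \<in> band_projections \<Longrightarrow> \<rho> (x - y) = \<rho> x - \<rho> y"
  using band_projection_add[of \<rho> "x - y" y] by (simp add: algebra_simps)

lemma band_projection_mono: "\<rho> \<in> band_projections \<Longrightarrow> x \<le> y \<Longrightarrow> \<rho> x \<le> \<rho> y"
  using band_projection_nonneg[of \<rho> "y - x"] band_projection_diff[of \<rho> y x] by simp

lemma id_band_projection: "(\<lambda>x. x) \<in> band_projections"
  unfolding band_projections_def is_projection_band_def
  by (intro CollectI exI[of _ UNIV]) (auto simp: is_band_def vdcomp_0 intro!: bexI[of _ 0])

lemma cInf_set_plus:
  fixes A B :: "'a::{lattice_ab_group_add, conditionally_complete_lattice} set"
  assumes "A \<noteq> {}" "B \<noteq> {}" "bdd_below A" "bdd_below B"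
  shows "Inf {a + b | a b. a \<in> A \<and> b \<in> B} = Inf A + Inf B"
proof (rule order_antisym)
  let ?C = "{a + b | a b. a \<in> A \<and> b \<in> B}"
  have ne: "?C \<noteq> {}" using assms by blast
  show "Inf A + Inf B \<le> Inf ?C"
    by (rule cInf_greatest[OF ne]) (auto intro!: add_mono cInf_lower assms)
  have "\<forall>b\<in>B. Inf ?C - b \<le> Inf A"
  proof
    fix b assume b: "b \<in> B"
    have "bdd_below ?C"
    proof -
      obtain m1 where "\<forall>a\<in>A. m1 \<le> a" using assms(3) by (auto simp: bdd_below_def)
      moreover obtain m2 where "\<forall>b\<in>B. m2 \<le> b" using assms(4) by (auto simp: bdd_below_def)
      ultimately show ?thesis by (intro bdd_belowI[of _ "m1 + m2"]) (auto intro: add_mono)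
    qed
    hence "\<forall>a\<in>A. Inf ?C \<le> a + b" using b by (auto intro: cInf_lower)
    hence "\<forall>a\<in>A. Inf ?C - b \<le> a" by (simp add: diff_le_eq)
    thus "Inf ?C - b \<le> Inf A" using assms(1) by (intro cInf_greatest) auto
  qed
  hence "\<forall>b\<in>B. Inf ?C - Inf A \<le> b" by (simp add: diff_le_eq add.commute le_diff_eq)
  hence "Inf ?C - Inf A \<le> Inf B" using assms(2) by (intro cInf_greatest) auto
  thus "Inf ?C \<le> Inf A + Inf B" by (simp add: diff_le_eq add.commute)
qed

lemma cSUP_add_incseq:
  fixes a b :: "nat \<Rightarrow> 'a::{lattice_ab_group_add, conditionally_complete_lattice}"
  assumes a: "incseq a" and b: "incseq b"
    and ba: "bdd_above (range a)" and bb: "bdd_above (range b)"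
  shows "Sup (range (\<lambda>n. a n + b n)) = Sup (range a) + Sup (range b)"
proof (rule order_antisym)
  show "Sup (range (\<lambda>n. a n + b n)) \<le> Sup (range a) + Sup (range b)"
    by (rule cSUP_least) (auto intro!: add_mono cSUP_upper ba bb)
  have bab: "bdd_above (range (\<lambda>n. a n + b n))"
  proof -
    obtain A where "\<forall>n. a n \<le> A" using ba by (auto simp: bdd_above_def)
    moreover obtain B where "\<forall>n. b n \<le> B" using bb by (auto simp: bdd_above_def)
    ultimately show ?thesis by (intro bdd_aboveI[of _ "A + B"]) (auto intro: add_mono)
  qed
  have "\<forall>k. Sup (range a) \<le> Sup (range (\<lambda>n. a n + b n)) - b k"
  proof
    fix k
    have "\<forall>m. a m \<le> Sup (range (\<lambda>n. a n + b n)) - b k"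
    proof
      fix m
      have "a m + b k \<le> a (max m k) + b (max m k)"
        using a b by (intro add_mono) (auto simp: incseq_def)
      also have "\<dots> \<le> Sup (range (\<lambda>n. a n + b n))" by (rule cSUP_upper[OF UNIV_I bab])
      finally show "a m \<le> Sup (range (\<lambda>n. a n + b n)) - b k" by (simp add: le_diff_eq)
    qed
    thus "Sup (range a) \<le> Sup (range (\<lambda>n. a n + b n)) - b k" by (intro cSUP_least) auto
  qed
  hence "\<forall>k. b k \<le> Sup (range (\<lambda>n. a n + b n)) - Sup (range a)"
    by (metis add.commute le_diff_eq)
  hence "Sup (range b) \<le> Sup (range (\<lambda>n. a n + b n)) - Sup (range a)" by (intro cSUP_least) auto
  thus "Sup (range a) + Sup (range b) \<le> Sup (range (\<lambda>n. a n + b n))"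
    by (metis add.commute le_diff_eq)
qed

lemma nonpos_if_le_scaleR_all_pos:
  fixes d e :: "'a::{vector_lattice, conditionally_complete_lattice}"
  assumes e: "0 \<le> e" and h: "\<And>t. 0 < t \<Longrightarrow> d \<le> t *\<^sub>R e"
  shows "d \<le> 0"
proof -
  define M where "M = Inf ((\<lambda>t. t *\<^sub>R e) ` {0<..})"
  have ne: "(\<lambda>t. t *\<^sub>R e) ` {0<..} \<noteq> {}" by auto
  have bdd: "bdd_below ((\<lambda>t. t *\<^sub>R e) ` {0<..})"
    using e by (intro bdd_belowI[of _ 0]) (auto intro: scaleR_nonneg_nonneg)
  have dM: "d \<le> M" unfolding M_def using h by (intro cInf_greatest[OF ne]) auto
  have h2: "\<forall>v\<in>(\<lambda>t. t *\<^sub>R e) ` {0<..}. 2 *\<^sub>R M \<le> v"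
  proof
    fix v assume "v \<in> (\<lambda>t. t *\<^sub>R e) ` {0<..}"
    then obtain t where t: "0 < t" "v = t *\<^sub>R e" by auto
    have "M \<le> (t / 2) *\<^sub>R e" unfolding M_def using t by (intro cInf_lower[OF _ bdd]) auto
    hence "2 *\<^sub>R M \<le> 2 *\<^sub>R ((t / 2) *\<^sub>R e)" by (rule scaleR_left_mono) simp
    thus "2 *\<^sub>R M \<le> v" using t by simp
  qed
  have "2 *\<^sub>R M \<le> Inf ((\<lambda>t. t *\<^sub>R e) ` {0<..})" using h2 by (intro cInf_greatest[OF ne]) blast
  hence "2 *\<^sub>R M \<le> M" by (simp only: M_def[symmetric])
  hence "M + M \<le> M" by (simp only: scaleR_2)
  hence "M \<le> 0" by simp
  thus ?thesis using dM by simp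
qed

lemma cSup_image_diff:
  fixes A :: "'a::{lattice_ab_group_add, conditionally_complete_lattice} set"
  assumes ne: "A \<noteq> {}" and bdd: "bdd_below A"
  shows "Sup ((\<lambda>v. c - v) ` A) = c - Inf A"
proof (rule order_antisym)
  show "Sup ((\<lambda>v. c - v) ` A) \<le> c - Inf A"
    using ne by (rule cSUP_least) (auto intro: diff_left_mono cInf_lower[OF _ bdd])
  obtain m where m: "\<forall>v\<in>A. m \<le> v" using bdd by (auto simp: bdd_below_def)
  have bi: "bdd_above ((\<lambda>v. c - v) ` A)" using m
    by (intro bdd_aboveI[of _ "c - m"]) (auto intro: diff_left_mono)
  have "\<forall>v\<in>A. c - Sup ((\<lambda>v. c - v) ` A) \<le> v"
    using cSUP_upper[OF _ bi] by (metis diff_le_eq add.commute le_diff_eq)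
  hence "c - Sup ((\<lambda>v. c - v) ` A) \<le> Inf A" using ne by (intro cInf_greatest) auto
  thus "c - Inf A \<le> Sup ((\<lambda>v. c - v) ` A)" by (metis diff_le_eq add.commute le_diff_eq)
qed

lemma cInf_image_diff:
  fixes A :: "'a::{lattice_ab_group_add, conditionally_complete_lattice} set"
  assumes ne: "A \<noteq> {}" and bdd: "bdd_above A"
  shows "Inf ((\<lambda>v. c - v) ` A) = c - Sup A"
proof (rule order_antisym)
  show "c - Sup A \<le> Inf ((\<lambda>v. c - v) ` A)"
    using ne by (rule cINF_greatest) (auto intro: diff_left_mono cSup_upper[OF _ bdd])
  obtain m where m: "\<forall>v\<in>A. v \<le> m" using bdd by (auto simp: bdd_above_def)
  have bi: "bdd_below ((\<lambda>v. c - v) ` A)" using m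
    by (intro bdd_belowI[of _ "c - m"]) (auto intro: diff_left_mono)
  have "\<forall>v\<in>A. v \<le> c - Inf ((\<lambda>v. c - v) ` A)"
    using cINF_lower[OF bi] by (metis diff_le_eq add.commute le_diff_eq)
  hence "Sup A \<le> c - Inf ((\<lambda>v. c - v) ` A)" using ne by (intro cSup_least) auto
  thus "Inf ((\<lambda>v. c - v) ` A) \<le> c - Sup A" by (metis diff_le_eq add.commute le_diff_eq)
qed

lemma nonpos_if_le_SUP_diff:
  fixes s :: "nat \<Rightarrow> 'a::{lattice_ab_group_add, conditionally_complete_lattice}"
  assumes "bdd_above (range s)" "\<And>n. c \<le> Sup (range s) - s n"
  shows "c \<le> 0"
proof -
  have "s n \<le> Sup (range s) - c" for n using assms(2)[of n] by (simp add: le_diff_eq add.commute)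
  hence "Sup (range s) \<le> Sup (range s) - c" by (intro cSUP_least) auto
  thus ?thesis by (simp add: le_diff_eq)
qed

subsection \<open>Band projections in a Dedekind complete vector lattice\<close>

text \<open>The component of \<open>v \<ge> 0\<close> in the band generated by \<open>u \<ge> 0\<close>.\<close>

definition gen_band_part :: "'a::{vector_lattice, conditionally_complete_lattice} \<Rightarrow> 'a \<Rightarrow> 'a" where
  "gen_band_part u v = Sup (range (\<lambda>n::nat. inf v (real n *\<^sub>R u)))"

context
  fixes u v :: "'a::{vector_lattice, conditionally_complete_lattice}"
  assumes u: "0 \<le> u" and v: "0 \<le> v"
begin

lemma gen_band_part_bdd: "bdd_above (range (\<lambda>n::nat. inf v (real n *\<^sub>R u)))"
  by (rule bdd_aboveI[of _ v]) auto

lemma gen_band_part_ge: "inf v (real n *\<^sub>R u) \<le> gen_band_part u v"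
  unfolding gen_band_part_def by (rule cSUP_upper[OF UNIV_I gen_band_part_bdd])

lemma gen_band_part_le: "gen_band_part u v \<le> v"
  unfolding gen_band_part_def by (rule cSUP_least) auto

lemma gen_band_part_nonneg: "0 \<le> gen_band_part u v"
  using gen_band_part_ge[of 0] v by (simp add: inf_absorb2)

lemma vdisj_diff_gen_band_part: "vdisj (v - gen_band_part u v) u"
proof -
  define c where "c = inf (v - gen_band_part u v) u"
  have "c \<le> gen_band_part u v - inf v (real n *\<^sub>R u)" for n
  proof -
    define m where "m = inf v (real n *\<^sub>R u)"
    have "c \<le> inf (v - m) u"
      unfolding c_def m_def by (rule inf_mono[OF diff_left_mono[OF gen_band_part_ge] order_refl])
    hence "c + m \<le> inf (v - m) u + m" by (rule add_right_mono)
    also have "\<dots> = inf v (u + m)" by (simp add: add_inf_distrib_right)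
    also have "\<dots> \<le> inf v (real (Suc n) *\<^sub>R u)"
      by (intro inf_mono) (simp_all add: m_def algebra_simps le_infI2)
    also have "\<dots> \<le> gen_band_part u v" by (rule gen_band_part_ge)
    finally show ?thesis by (simp only: m_def le_diff_eq)
  qed
  hence "c \<le> 0" by (intro nonpos_if_le_SUP_diff[OF gen_band_part_bdd]) (simp add: gen_band_part_def)
  moreover have "0 \<le> c" using gen_band_part_le u by (simp add: c_def)
  ultimately have "c = 0" by (rule order_antisym)
  thus ?thesis using gen_band_part_le u by (simp add: vdisj_nonneg_iff c_def)
qed

lemma vdisj_gen_band_part:
  assumes "vdisj z u"
  shows "vdisj (gen_band_part u v) z"
proof -
  define e where "e = vabs z"
  have e0: "0 \<le> e" by (simp add: e_def vabs_nonneg)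
  have eu: "inf e u = 0" using assms u by (simp add: vdisj_def vabs_pos e_def)
  define c where "c = inf e (gen_band_part u v)"
  have "c \<le> gen_band_part u v - inf v (real n *\<^sub>R u)" for n
  proof -
    define m where "m = inf v (real n *\<^sub>R u)"
    have "inf (real n *\<^sub>R u) e = 0" using inf_scaleR_eq_0[OF u e0, of "real n"] eu
      by (simp add: inf_commute)
    hence em: "inf e m \<le> 0" unfolding m_def by (metis inf_commute inf_le2 inf_mono order_refl)
    have "c = inf e (m + (gen_band_part u v - m))" by (simp add: c_def)
    also have "\<dots> \<le> inf e m + (gen_band_part u v - m)"
      by (rule inf_add_nonneg_le)
        (use gen_band_part_ge[of n] in \<open>simp only: m_def diff_ge_0_iff_ge\<close>)
    also have "\<dots> \<le> gen_band_part u v - m" using em by simp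
    finally show ?thesis by (simp add: m_def)
  qed
  hence "c \<le> 0" by (intro nonpos_if_le_SUP_diff[OF gen_band_part_bdd]) (simp add: gen_band_part_def)
  moreover have "0 \<le> c" using gen_band_part_nonneg e0 by (simp add: c_def)
  ultimately have "c = 0" by (rule order_antisym)
  thus ?thesis using gen_band_part_nonneg by (simp add: vdisj_def vabs_pos c_def e_def inf_commute)
qed


end

lemma band_projection_vanishing:
  fixes u :: "'a::{vector_lattice, conditionally_complete_lattice}"
  assumes u: "0 \<le> u"
  obtains \<rho> where "\<rho> \<in> band_projections" "\<rho> u = 0" "\<And>z. vdisj z u \<Longrightarrow> \<rho> z = z"
proof -
  define B where "B = vdcomp {u}"
  define W where "W = gen_band_part u"
  define \<rho> where "\<rho> x = (pprt x - W (pprt x)) - (pprt (- x) - W (pprt (- x)))" for x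
  have B: "is_band B" unfolding B_def by (rule is_band_vdcomp)
  have \<rho>: "\<forall>x. \<rho> x \<in> B \<and> x - \<rho> x \<in> vdcomp B"
  proof
    fix x
    have in_B: "v - W v \<in> B" and in_vdcomp: "W v \<in> vdcomp B" if "0 \<le> v" for v
      using vdisj_diff_gen_band_part[OF u that] vdisj_gen_band_part[OF u that]
      by (auto simp: B_def vdcomp_def W_def)
    have "\<rho> x \<in> B" unfolding \<rho>_def by (intro is_band_diff[OF B] in_B) simp_all
    moreover have "x - \<rho> x = W (pprt x) - W (pprt (- x))"
      using pprt_split[of x] by (simp add: \<rho>_def algebra_simps)
    hence "x - \<rho> x \<in> vdcomp B" by (simp add: vdcomp_diff in_vdcomp)
    ultimately show "\<rho> x \<in> B \<and> x - \<rho> x \<in> vdcomp B" by simp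
  qed
  have "\<rho> \<in> band_projections"
    unfolding band_projections_def is_projection_band_def
    using B \<rho> by (intro CollectI exI[of _ B]) (metis diff_add_cancel add.commute)
  moreover have "u \<in> vdcomp B" by (auto simp: B_def vdcomp_def vdisj_sym)
  hence "\<rho> (0 + u) = 0" by (intro band_projection_unique[OF B \<rho>] is_bandD(1)[OF B])
  moreover have "\<rho> z = z" if "vdisj z u" for z
    using band_projection_unique[OF B \<rho>, of z 0] that
    by (simp add: B_def vdcomp_def vdcomp_0 vdisj_0)
  ultimately show ?thesis using that by simp
qed

lemma band_projection_to_pprt:
  fixes g :: "'a::{vector_lattice, conditionally_complete_lattice}"
  obtains \<rho> where "\<rho> \<in> band_projections" "\<rho> g = pprt g"
proof -
  obtain \<rho> where \<rho>: "\<rho> \<in> band_projections" "\<rho> (pprt (- g)) = 0"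
    and id: "\<And>z. vdisj z (pprt (- g)) \<Longrightarrow> \<rho> z = z"
    using band_projection_vanishing[of "pprt (- g)"] by auto
  have "\<rho> g = \<rho> (pprt g) - \<rho> (pprt (- g))"
    by (subst pprt_split) (rule band_projection_diff[OF \<rho>(1)])
  thus ?thesis using that \<rho> id[OF vdisj_pprt_pprt_neg] by simp
qed

lemma band_projection_compare:
  fixes a b :: "'a::{vector_lattice, conditionally_complete_lattice}"
  assumes "0 \<le> a" "0 \<le> b"
  obtains \<rho> where "\<rho> \<in> band_projections" "\<rho> a \<le> b" "b - \<rho> b \<le> a"
proof -
  obtain \<rho> where \<rho>: "\<rho> \<in> band_projections" and g: "\<rho> (b - a) = pprt (b - a)"
    by (rule band_projection_to_pprt)
  have "0 \<le> \<rho> b - \<rho> a" using g band_projection_diff[OF \<rho>, of b a] by simp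
  hence "\<rho> a \<le> \<rho> b" by simp
  also have "\<dots> \<le> b" using band_projection_le[OF \<rho> assms(2)] .
  finally have "\<rho> a \<le> b" .
  have "(b - a) - \<rho> (b - a) = nprt (b - a)"
    unfolding g by (metis prts add_diff_cancel_left')
  hence "(b - \<rho> b) - (a - \<rho> a) \<le> 0"
    using band_projection_diff[OF \<rho>, of b a] nprt_le_zero[of "b - a"] by (simp add: algebra_simps)
  hence "b - \<rho> b \<le> a - \<rho> a" by simp
  also have "\<dots> \<le> a" using band_projection_nonneg[OF \<rho> assms(1)] by simp
  finally show ?thesis using that \<rho> \<open>\<rho> a \<le> b\<close> by blast
qed

lemma UOp_iff: "T \<in> UOp \<longleftrightarrow> (\<forall>x y. vdisj x y \<longrightarrow> T (x + y) = T x + T y) \<and> order_bounded_op T"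
  by (simp add: UOp_def orth_additive_def)

lemma UOp_add_vdisj: "T \<in> UOp \<Longrightarrow> vdisj x y \<Longrightarrow> T (x + y) = T x + T y"
  by (simp add: UOp_iff)

lemma UOp_zero: "T \<in> UOp \<Longrightarrow> T 0 = 0"
  using UOp_add_vdisj[of T 0 0] vdisj_0[of 0] by simp

lemma UOp_fragment: "T \<in> UOp \<Longrightarrow> y \<in> fragments x \<Longrightarrow> T x = T y + T (x - y)"
  using UOp_add_vdisj[of T y "x - y"] by (simp add: fragments_def)

lemma UOp_boundedE:
  assumes "T \<in> UOp" "order_bounded_set A"
  obtains m M where "\<And>x. x \<in> A \<Longrightarrow> m \<le> T x \<and> T x \<le> M"
proof -
  have "order_bounded_set (T ` A)" using assms by (simp add: UOp_def order_bounded_op_def)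
  then obtain m M where "T ` A \<subseteq> {m..M}" by (auto simp: order_bounded_set_def)
  thus ?thesis using that by (meson atLeastAtMost_iff image_subset_iff)
qed

lemma order_bounded_opI:
  fixes T :: "'a::vector_lattice \<Rightarrow> 'b::vector_lattice"
  assumes "\<And>A. order_bounded_set A \<Longrightarrow> \<exists>m M. \<forall>x\<in>A. m \<le> T x \<and> T x \<le> M"
  shows "order_bounded_op T"
  unfolding order_bounded_op_def
proof (intro allI impI)
  fix A :: "'a set" assume "order_bounded_set A"
  then obtain m M where "\<forall>x\<in>A. m \<le> T x \<and> T x \<le> M" using assms by blast
  hence "T ` A \<subseteq> {m..M}" by auto
  thus "order_bounded_set (T ` A)" unfolding order_bounded_set_def by blast
qed

lemma UOp_plus:
  assumes "S \<in> UOp" "T \<in> UOp"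
  shows "(\<lambda>x. S x + T x) \<in> UOp"
proof -
  have "order_bounded_op (\<lambda>x. S x + T x)"
  proof (rule order_bounded_opI)
    fix A :: "'a set" assume A: "order_bounded_set A"
    obtain m1 M1 m2 M2 where "\<And>x. x \<in> A \<Longrightarrow> m1 \<le> S x \<and> S x \<le> M1 \<and> m2 \<le> T x \<and> T x \<le> M2"
      using UOp_boundedE[OF assms(1) A] UOp_boundedE[OF assms(2) A] by metis
    thus "\<exists>m M. \<forall>x\<in>A. m \<le> S x + T x \<and> S x + T x \<le> M" by (metis add_mono)
  qed
  thus ?thesis using assms by (simp add: UOp_iff algebra_simps)
qed

lemma UOp_uminus:
  assumes "T \<in> UOp"
  shows "(\<lambda>x. - T x) \<in> UOp"
proof -
  have "order_bounded_op (\<lambda>x. - T x)"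
  proof (rule order_bounded_opI)
    fix A :: "'a set" assume "order_bounded_set A"
    then obtain m M where "\<And>x. x \<in> A \<Longrightarrow> m \<le> T x \<and> T x \<le> M" using UOp_boundedE[OF assms] by metis
    thus "\<exists>m M. \<forall>x\<in>A. m \<le> - T x \<and> - T x \<le> M" by (metis neg_le_iff_le)
  qed
  thus ?thesis using assms by (simp add: UOp_iff)
qed

lemma UOp_minus: "S \<in> UOp \<Longrightarrow> T \<in> UOp \<Longrightarrow> (\<lambda>x. S x - T x) \<in> UOp"
  using UOp_plus[of S "\<lambda>x. - T x"] UOp_uminus[of T] by simp

lemma UOp_zero_op: "(\<lambda>x. 0) \<in> UOp"
  by (auto simp: UOp_iff intro: order_bounded_opI)

lemma UOp_scaleR:
  assumes "T \<in> UOp" "0 \<le> c"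
  shows "(\<lambda>x. c *\<^sub>R T x) \<in> UOp"
proof -
  have "order_bounded_op (\<lambda>x. c *\<^sub>R T x)"
  proof (rule order_bounded_opI)
    fix A :: "'a set" assume "order_bounded_set A"
    then obtain m M where "\<And>x. x \<in> A \<Longrightarrow> m \<le> T x \<and> T x \<le> M" using UOp_boundedE[OF assms(1)] by metis
    thus "\<exists>m M. \<forall>x\<in>A. m \<le> c *\<^sub>R T x \<and> c *\<^sub>R T x \<le> M" using assms(2) by (metis scaleR_left_mono)
  qed
  thus ?thesis using assms by (simp add: UOp_iff scaleR_add_right)
qed

subsection \<open>The lattice operations of \<open>\<U>(E,F)\<close>\<close>

lemma vabs_le_if_between:
  assumes "a \<le> x" "x \<le> b"
  shows "vabs x \<le> vabs a + vabs b"
proof (rule vabs_least)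
  have "x \<le> vabs b" by (rule order.trans[OF assms(2) vabs_ge])
  thus "x \<le> vabs a + vabs b" using vabs_nonneg[of a] by (metis add_increasing)
  have "- x \<le> vabs a" using assms(1) vabs_ge_neg[of a] by (metis neg_le_iff_le order.trans)
  thus "- x \<le> vabs a + vabs b" using vabs_nonneg[of b] by (metis add_increasing2)
qed

lemma fragments_between:
  assumes "y \<in> fragments x" "vabs x \<le> c"
  shows "- c \<le> y" "y \<le> c"
proof -
  have "vabs y \<le> c" using fragments_vabs_le[OF assms(1)] assms(2) by (rule order.trans)
  hence "- y \<le> c" "y \<le> c" using vabs_ge[of y] vabs_ge_neg[of y] by (auto intro: order.trans)
  thus "- c \<le> y" "y \<le> c" by (simp_all add: minus_le_iff)
qed

definition frag_sums :: "('e::vector_lattice \<Rightarrow> 'f::vector_lattice) \<Rightarrow> ('e \<Rightarrow> 'f) \<Rightarrow> 'e \<Rightarrow> 'f set" where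
  "frag_sums R1 R2 x = {R1 y + R2 (x - y) | y. y \<in> fragments x}"

definition U_inf ::
    "('e::vector_lattice \<Rightarrow> 'f::{vector_lattice, conditionally_complete_lattice}) \<Rightarrow> ('e \<Rightarrow> 'f) \<Rightarrow> 'e \<Rightarrow> 'f" where
  "U_inf R1 R2 x = Inf (frag_sums R1 R2 x)"

lemma frag_sums_bounded_below:
  assumes R: "R1 \<in> UOp" "R2 \<in> UOp" and A: "order_bounded_set A"
  obtains m where "\<And>x v. x \<in> A \<Longrightarrow> v \<in> frag_sums R1 R2 x \<Longrightarrow> m \<le> v"
proof -
  obtain a b where ab: "A \<subseteq> {a..b}" using A by (auto simp: order_bounded_set_def)
  define c where "c = vabs a + vabs b"
  have c: "order_bounded_set {- c..c}"
    unfolding order_bounded_set_def by (intro exI[of _ "- c"] exI[of _ c]) auto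
  obtain m1 M1 where 1: "\<And>x. x \<in> {- c..c} \<Longrightarrow> m1 \<le> R1 x \<and> R1 x \<le> M1"
    using UOp_boundedE[OF R(1) c] by blast
  obtain m2 M2 where 2: "\<And>x. x \<in> {- c..c} \<Longrightarrow> m2 \<le> R2 x \<and> R2 x \<le> M2"
    using UOp_boundedE[OF R(2) c] by blast
  have "m1 + m2 \<le> R1 y + R2 (x - y)" if x: "x \<in> A" and y: "y \<in> fragments x" for x y
  proof -
    have "vabs x \<le> c" unfolding c_def using ab x by (intro vabs_le_if_between) auto
    hence "y \<in> {- c..c}" "x - y \<in> {- c..c}"
      using fragments_between[OF y] fragments_between[OF fragments_compl[OF y]] by auto
    thus ?thesis using 1 2 by (auto intro: add_mono)
  qed
  thus ?thesis by (intro that[of "m1 + m2"]) (auto simp: frag_sums_def)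
qed

lemma U_inf_basic:
  assumes R: "R1 \<in> UOp" "R2 \<in> UOp"
  shows frag_sums_nonempty: "frag_sums R1 R2 x \<noteq> {}"
    and frag_sums_bdd: "bdd_below (frag_sums R1 R2 x)"
    and "y \<in> fragments x \<Longrightarrow> U_inf R1 R2 x \<le> R1 y + R2 (x - y)"
    and U_inf_le1: "U_inf R1 R2 x \<le> R1 x"
    and U_inf_le2: "U_inf R1 R2 x \<le> R2 x"
proof -
  show "frag_sums R1 R2 x \<noteq> {}" using fragments_0 by (auto simp: frag_sums_def)
  have "order_bounded_set {x}" unfolding order_bounded_set_def by (intro exI[of _ x]) auto
  then obtain m where "\<And>x' v. x' \<in> {x} \<Longrightarrow> v \<in> frag_sums R1 R2 x' \<Longrightarrow> m \<le> v"
    using frag_sums_bounded_below[OF R] by blast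
  thus bdd: "bdd_below (frag_sums R1 R2 x)" by (intro bdd_belowI[of _ m]) simp
  show lower: "y \<in> fragments x \<Longrightarrow> U_inf R1 R2 x \<le> R1 y + R2 (x - y)" for y
    unfolding U_inf_def by (rule cInf_lower[OF _ bdd]) (auto simp: frag_sums_def)
  show "U_inf R1 R2 x \<le> R1 x" using lower[OF fragments_self] UOp_zero[OF R(2)] by simp
  show "U_inf R1 R2 x \<le> R2 x" using lower[OF fragments_0] UOp_zero[OF R(1)] by simp
qed

lemma U_inf_greatest:
  assumes R: "R1 \<in> UOp" "R2 \<in> UOp" and k: "k \<in> UOp" "\<forall>x. k x \<le> R1 x" "\<forall>x. k x \<le> R2 x"
  shows "k x \<le> U_inf R1 R2 x"
  unfolding U_inf_def
proof (rule cInf_greatest[OF frag_sums_nonempty[OF R]])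
  fix v assume "v \<in> frag_sums R1 R2 x"
  then obtain y where y: "y \<in> fragments x" and v: "v = R1 y + R2 (x - y)"
    by (auto simp: frag_sums_def)
  have "k x = k y + k (x - y)" using UOp_fragment[OF k(1) y] .
  also have "\<dots> \<le> R1 y + R2 (x - y)" using k by (intro add_mono) auto
  finally show "k x \<le> v" using v by simp
qed

lemma frag_sums_add_vdisj:
  assumes R: "R1 \<in> UOp" "R2 \<in> UOp" and d: "vdisj x z"
  shows "frag_sums R1 R2 (x + z) = {a + b | a b. a \<in> frag_sums R1 R2 x \<and> b \<in> frag_sums R1 R2 z}"
proof -
  have sum: "R1 (y1 + y2) + R2 (x + z - (y1 + y2)) = (R1 y1 + R2 (x - y1)) + (R1 y2 + R2 (z - y2))"
    if "y1 \<in> fragments x" "y2 \<in> fragments z" for y1 y2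
  proof -
    have "x + z - (y1 + y2) = (x - y1) + (z - y2)" by (simp add: algebra_simps)
    thus ?thesis
      using UOp_add_vdisj[OF R(1) fragments_add_disjoint(2)[OF d that]]
        UOp_add_vdisj[OF R(2) fragments_add_disjoint(3)[OF d that]]
      by (simp add: algebra_simps)
  qed
  show ?thesis
  proof (intro set_eqI iffI)
    fix v assume "v \<in> frag_sums R1 R2 (x + z)"
    then obtain y where y: "y \<in> fragments (x + z)" and v: "v = R1 y + R2 (x + z - y)"
      by (auto simp: frag_sums_def)
    obtain y1 y2 where "y1 \<in> fragments x" "y2 \<in> fragments z" "y = y1 + y2"
      using fragments_of_disjoint_sum[OF d y] .
    thus "v \<in> {a + b | a b. a \<in> frag_sums R1 R2 x \<and> b \<in> frag_sums R1 R2 z}"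
      using sum v by (auto simp: frag_sums_def)
  next
    fix v assume "v \<in> {a + b | a b. a \<in> frag_sums R1 R2 x \<and> b \<in> frag_sums R1 R2 z}"
    then obtain y1 y2 where y12: "y1 \<in> fragments x" "y2 \<in> fragments z"
      and v: "v = (R1 y1 + R2 (x - y1)) + (R1 y2 + R2 (z - y2))"
      by (auto simp: frag_sums_def)
    thus "v \<in> frag_sums R1 R2 (x + z)"
      using sum[OF y12] fragments_add_disjoint(1)[OF d y12] unfolding frag_sums_def by force
  qed
qed

lemma UOp_U_inf:
  assumes R: "R1 \<in> UOp" "R2 \<in> UOp"
  shows "U_inf R1 R2 \<in> UOp"
  unfolding UOp_iff
proof (intro conjI allI impI order_bounded_opI)
  fix x z :: 'a assume "vdisj x z"
  hence "frag_sums R1 R2 (x + z) = {a + b | a b. a \<in> frag_sums R1 R2 x \<and> b \<in> frag_sums R1 R2 z}"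
    by (rule frag_sums_add_vdisj[OF R])
  thus "U_inf R1 R2 (x + z) = U_inf R1 R2 x + U_inf R1 R2 z"
    using frag_sums_nonempty[OF R] frag_sums_bdd[OF R] by (simp add: U_inf_def cInf_set_plus)
next
  fix A :: "'a set" assume A: "order_bounded_set A"
  obtain m where m: "\<And>x v. x \<in> A \<Longrightarrow> v \<in> frag_sums R1 R2 x \<Longrightarrow> m \<le> v"
    using frag_sums_bounded_below[OF R A] by blast
  obtain m1 M1 where M1: "\<And>x. x \<in> A \<Longrightarrow> m1 \<le> R1 x \<and> R1 x \<le> M1" using UOp_boundedE[OF R(1) A] by blast
  have "m \<le> U_inf R1 R2 x \<and> U_inf R1 R2 x \<le> M1" if x: "x \<in> A" for x
  proof
    show "m \<le> U_inf R1 R2 x"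
      unfolding U_inf_def by (rule cInf_greatest[OF frag_sums_nonempty[OF R]]) (rule m[OF x])
    show "U_inf R1 R2 x \<le> M1" using U_inf_le1[OF R, of x] M1[OF x] by (auto intro: order.trans)
  qed
  thus "\<exists>m M. \<forall>x\<in>A. m \<le> U_inf R1 R2 x \<and> U_inf R1 R2 x \<le> M" by blast
qed

lemma U_inf_mono:
  assumes "A \<in> UOp" "B \<in> UOp" "A' \<in> UOp" "B' \<in> UOp" "\<forall>x. A x \<le> A' x" "\<forall>x. B x \<le> B' x"
  shows "U_inf A B x \<le> U_inf A' B' x"
proof (rule U_inf_greatest[OF assms(3,4) UOp_U_inf[OF assms(1,2)]])
  show "\<forall>x. U_inf A B x \<le> A' x" using U_inf_le1[OF assms(1,2)] assms(5) by (metis order.trans)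
  show "\<forall>x. U_inf A B x \<le> B' x" using U_inf_le2[OF assms(1,2)] assms(6) by (metis order.trans)
qed

lemma U_inf_nonneg:
  assumes "A \<in> UOp" "B \<in> UOp" "\<forall>x. 0 \<le> A x" "\<forall>x. 0 \<le> B x"
  shows "0 \<le> U_inf A B x"
  using U_inf_greatest[OF assms(1,2) UOp_zero_op] assms by simp

lemma U_inf_commute:
  assumes "A \<in> UOp" "B \<in> UOp"
  shows "U_inf A B x = U_inf B A x"
  using assms U_inf_le1 U_inf_le2
  by (intro order_antisym U_inf_greatest UOp_U_inf) auto

lemma U_inf_self:
  assumes "A \<in> UOp" shows "U_inf A A x = A x"
  using assms U_inf_le1[of A A x] U_inf_greatest[of A A A x] by auto

lemma U_inf_add_right:
  assumes A: "A \<in> UOp" and B: "B \<in> UOp" and C: "C \<in> UOp"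
  shows "U_inf (\<lambda>x. A x + C x) (\<lambda>x. B x + C x) x = U_inf A B x + C x"
proof (rule order_antisym)
  have AC: "(\<lambda>x. A x + C x) \<in> UOp" "(\<lambda>x. B x + C x) \<in> UOp" using A B C by (simp_all add: UOp_plus)
  let ?M = "\<lambda>x. U_inf (\<lambda>x. A x + C x) (\<lambda>x. B x + C x) x - C x"
  have "?M \<in> UOp" using AC C by (intro UOp_minus UOp_U_inf)
  moreover have "\<forall>x. ?M x \<le> A x" "\<forall>x. ?M x \<le> B x"
    using U_inf_le1[OF AC] U_inf_le2[OF AC] by (simp_all add: diff_le_eq)
  ultimately have "?M x \<le> U_inf A B x" by (intro U_inf_greatest[OF A B])
  thus "U_inf (\<lambda>x. A x + C x) (\<lambda>x. B x + C x) x \<le> U_inf A B x + C x" by (simp add: diff_le_eq)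
  have K: "(\<lambda>x. U_inf A B x + C x) \<in> UOp" using A B C by (intro UOp_plus UOp_U_inf)
  have K1: "\<forall>x. U_inf A B x + C x \<le> A x + C x" "\<forall>x. U_inf A B x + C x \<le> B x + C x"
    using U_inf_le1[OF A B] U_inf_le2[OF A B] by (simp_all add: add_right_mono)
  show "U_inf A B x + C x \<le> U_inf (\<lambda>x. A x + C x) (\<lambda>x. B x + C x) x"
    using U_inf_greatest[OF AC K K1] by simp
qed

lemma U_inf_add_le_add_U_inf:
  assumes A: "A \<in> UOp" and B: "B \<in> UOp" and C: "C \<in> UOp"
    and pos: "\<forall>x. 0 \<le> A x" "\<forall>x. 0 \<le> B x" "\<forall>x. 0 \<le> C x"
  shows "U_inf A (\<lambda>x. B x + C x) x \<le> U_inf A B x + U_inf A C x"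
proof -
  have BC: "(\<lambda>x. B x + C x) \<in> UOp" using B C by (rule UOp_plus)
  have iAC: "U_inf A C \<in> UOp" using A C by (rule UOp_U_inf)
  have e1: "U_inf A B x + U_inf A C x = U_inf (\<lambda>x. A x + U_inf A C x) (\<lambda>x. B x + U_inf A C x) x"
    using U_inf_add_right[OF A B iAC] by simp
  have "\<forall>x. U_inf A (\<lambda>x. B x + C x) x \<le> A x + U_inf A C x"
    using U_inf_le1[OF A BC] U_inf_nonneg[OF A C pos(1,3)] by (metis add_increasing2)
  moreover have "\<forall>x. U_inf A (\<lambda>x. B x + C x) x \<le> B x + U_inf A C x"
  proof
    fix x
    have "B x + U_inf A C x = U_inf (\<lambda>x. A x + B x) (\<lambda>x. C x + B x) x"
      using U_inf_add_right[OF A C B] by (simp add: add.commute)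
    moreover have "U_inf A (\<lambda>x. B x + C x) x \<le> U_inf (\<lambda>x. A x + B x) (\<lambda>x. C x + B x) x"
      using A B C BC pos by (intro U_inf_mono UOp_plus) (auto simp: add.commute add_increasing2)
    ultimately show "U_inf A (\<lambda>x. B x + C x) x \<le> B x + U_inf A C x" by simp
  qed
  ultimately have "U_inf A (\<lambda>x. B x + C x) x
      \<le> U_inf (\<lambda>x. A x + U_inf A C x) (\<lambda>x. B x + U_inf A C x) x"
    using A B C iAC BC by (intro U_inf_greatest UOp_plus UOp_U_inf) auto
  thus ?thesis using e1 by simp
qed

lemma U_inf_add_nonneg_le:
  assumes A: "A \<in> UOp" and B: "B \<in> UOp" and E: "E \<in> UOp" and pos: "\<forall>x. 0 \<le> E x"
  shows "U_inf A (\<lambda>x. B x + E x) x \<le> U_inf A B x + E x"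
proof -
  have "U_inf A (\<lambda>x. B x + E x) x \<le> U_inf (\<lambda>x. A x + E x) (\<lambda>x. B x + E x) x"
    using A B E pos by (intro U_inf_mono UOp_plus) (auto simp: add_increasing2)
  also have "\<dots> = U_inf A B x + E x" by (rule U_inf_add_right[OF A B E])
  finally show ?thesis .
qed

definition U_sup ::
    "('e::vector_lattice \<Rightarrow> 'f::{vector_lattice, conditionally_complete_lattice}) \<Rightarrow> ('e \<Rightarrow> 'f) \<Rightarrow> 'e \<Rightarrow> 'f" where
  "U_sup R1 R2 x = R1 x + R2 x - U_inf R1 R2 x"

lemma U_sup_props:
  assumes R: "R1 \<in> UOp" "R2 \<in> UOp"
  shows UOp_U_sup: "U_sup R1 R2 \<in> UOp"
    and U_sup_ge1: "R1 x \<le> U_sup R1 R2 x"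
    and U_sup_ge2: "R2 x \<le> U_sup R1 R2 x"
    and U_sup_least: "k \<in> UOp \<Longrightarrow> \<forall>x. R1 x \<le> k x \<Longrightarrow> \<forall>x. R2 x \<le> k x \<Longrightarrow> U_sup R1 R2 x \<le> k x"
proof -
  have "(\<lambda>x. R1 x + R2 x - U_inf R1 R2 x) \<in> UOp" using R by (intro UOp_minus UOp_plus UOp_U_inf)
  thus "U_sup R1 R2 \<in> UOp" by (simp add: U_sup_def[abs_def])
  show "R1 x \<le> U_sup R1 R2 x" using U_inf_le2[OF R, of x] by (simp add: U_sup_def)
  show "R2 x \<le> U_sup R1 R2 x" using U_inf_le1[OF R, of x] by (simp add: U_sup_def)
  assume k: "k \<in> UOp" "\<forall>x. R1 x \<le> k x" "\<forall>x. R2 x \<le> k x"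
  have "(\<lambda>x. R1 x + R2 x - k x) \<in> UOp" using R k by (intro UOp_minus UOp_plus)
  moreover have "\<forall>x. R1 x + R2 x - k x \<le> R1 x" "\<forall>x. R1 x + R2 x - k x \<le> R2 x"
    using k by (auto simp: diff_le_eq add.commute add_left_mono)
  ultimately have "R1 x + R2 x - k x \<le> U_inf R1 R2 x"
    using U_inf_greatest[OF R, of "\<lambda>x. R1 x + R2 x - k x"] by simp
  thus "U_sup R1 R2 x \<le> k x" by (simp add: U_sup_def diff_le_eq le_diff_eq add.commute)
qed

lemma U_is_inf_iff:
  assumes "f \<in> UOp" "g \<in> UOp"
  shows "U_is_inf f g h \<longleftrightarrow> h = U_inf f g"
proof
  assume h: "U_is_inf f g h"
  hence hU: "h \<in> UOp" "\<forall>x. h x \<le> f x" "\<forall>x. h x \<le> g x" by (auto simp: U_is_inf_def le_fun_def)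
  have "\<forall>x. h x \<le> U_inf f g x" using hU by (auto intro: U_inf_greatest[OF assms])
  moreover have "U_inf f g \<le> h" using h UOp_U_inf[OF assms] U_inf_le1[OF assms] U_inf_le2[OF assms]
    by (auto simp: U_is_inf_def le_fun_def)
  ultimately show "h = U_inf f g" by (auto simp: le_fun_def intro: order_antisym)
next
  assume "h = U_inf f g"
  thus "U_is_inf f g h"
    using UOp_U_inf[OF assms] U_inf_le1[OF assms] U_inf_le2[OF assms] U_inf_greatest[OF assms]
    by (auto simp: U_is_inf_def le_fun_def)
qed

lemma U_is_sup_iff:
  assumes "f \<in> UOp" "g \<in> UOp"
  shows "U_is_sup f g h \<longleftrightarrow> h = U_sup f g"
proof
  assume h: "U_is_sup f g h"
  hence hU: "h \<in> UOp" "\<forall>x. f x \<le> h x" "\<forall>x. g x \<le> h x" by (auto simp: U_is_sup_def le_fun_def)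
  have "\<forall>x. U_sup f g x \<le> h x" using hU by (auto intro: U_sup_least[OF assms])
  moreover have "h \<le> U_sup f g" using h UOp_U_sup[OF assms] U_sup_ge1[OF assms] U_sup_ge2[OF assms]
    by (auto simp: U_is_sup_def le_fun_def)
  ultimately show "h = U_sup f g" by (auto simp: le_fun_def intro: order_antisym)
next
  assume "h = U_sup f g"
  thus "U_is_sup f g h"
    using UOp_U_sup[OF assms] U_sup_ge1[OF assms] U_sup_ge2[OF assms] U_sup_least[OF assms]
    by (auto simp: U_is_sup_def le_fun_def)
qed

definition U_abs :: "('e::vector_lattice \<Rightarrow> 'f::{vector_lattice, conditionally_complete_lattice}) \<Rightarrow> 'e \<Rightarrow> 'f" where
  "U_abs R = U_sup R (\<lambda>x. - R x)"

lemma U_abs_props: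
  assumes R: "R \<in> UOp"
  shows UOp_U_abs: "U_abs R \<in> UOp"
    and U_abs_ge: "R x \<le> U_abs R x"
    and U_abs_ge_neg: "- R x \<le> U_abs R x"
    and U_abs_least: "k \<in> UOp \<Longrightarrow> \<forall>x. R x \<le> k x \<Longrightarrow> \<forall>x. - R x \<le> k x \<Longrightarrow> U_abs R x \<le> k x"
    and U_abs_nonneg: "0 \<le> U_abs R x"
proof -
  have nR: "(\<lambda>x. - R x) \<in> UOp" using R by (rule UOp_uminus)
  show "U_abs R \<in> UOp" unfolding U_abs_def using R nR by (rule UOp_U_sup)
  show 1: "R x \<le> U_abs R x" unfolding U_abs_def using U_sup_ge1[OF R nR] .
  show 2: "- R x \<le> U_abs R x" unfolding U_abs_def using U_sup_ge2[OF R nR] by simp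
  show "k \<in> UOp \<Longrightarrow> \<forall>x. R x \<le> k x \<Longrightarrow> \<forall>x. - R x \<le> k x \<Longrightarrow> U_abs R x \<le> k x"
    unfolding U_abs_def using U_sup_least[OF R nR] by simp
  have "R x + - R x \<le> U_abs R x + U_abs R x" using 1 2 by (rule add_mono)
  thus "0 \<le> U_abs R x" by simp
qed

lemma U_abs_pos:
  assumes R: "R \<in> UOp" and pos: "\<forall>x. 0 \<le> R x"
  shows "U_abs R = R"
proof
  fix x
  have "U_abs R x \<le> R x" using R pos
    by (intro U_abs_least[OF R]) (auto intro: order.trans[of _ 0])
  thus "U_abs R x = R x" using U_abs_ge[OF R, of x] by simp
qed

lemma U_disj_iff:
  assumes R: "R \<in> UOp" and Q: "Q \<in> UOp"
  shows "U_disj R Q \<longleftrightarrow> (\<forall>x. U_inf (U_abs R) (U_abs Q) x = 0)"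
proof -
  have nR: "(\<lambda>x. - R x) \<in> UOp" using R by (rule UOp_uminus)
  have nQ: "(\<lambda>x. - Q x) \<in> UOp" using Q by (rule UOp_uminus)
  have "U_disj R Q \<longleftrightarrow> U_is_inf (U_abs R) (U_abs Q) (\<lambda>_. 0)"
    unfolding U_disj_def U_is_sup_iff[OF R nR] U_is_sup_iff[OF Q nQ] U_abs_def by simp
  also have "\<dots> \<longleftrightarrow> (\<lambda>_. 0) = U_inf (U_abs R) (U_abs Q)"
    by (rule U_is_inf_iff[OF UOp_U_abs[OF R] UOp_U_abs[OF Q]])
  also have "\<dots> \<longleftrightarrow> (\<forall>x. U_inf (U_abs R) (U_abs Q) x = 0)" by (auto simp: fun_eq_iff)
  finally show ?thesis .
qed

lemma U_abs_diff_le: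
  assumes R: "R1 \<in> UOp" "R2 \<in> UOp"
  shows "U_abs (\<lambda>x. R1 x - R2 x) x \<le> U_abs R1 x + U_abs R2 x"
proof (rule U_abs_least)
  show "(\<lambda>x. R1 x - R2 x) \<in> UOp" using R by (rule UOp_minus)
  show "(\<lambda>x. U_abs R1 x + U_abs R2 x) \<in> UOp" using R by (intro UOp_plus UOp_U_abs)
  show "\<forall>x. R1 x - R2 x \<le> U_abs R1 x + U_abs R2 x"
    using U_abs_ge[OF R(1)] U_abs_ge_neg[OF R(2)] by (metis add_mono diff_conv_add_uminus)
  show "\<forall>x. - (R1 x - R2 x) \<le> U_abs R1 x + U_abs R2 x"
    using U_abs_ge_neg[OF R(1)] U_abs_ge[OF R(2)]
    by (metis add_mono minus_diff_eq diff_conv_add_uminus add.commute)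
qed

lemma U_inf_U_abs_diff_eq_0:
  assumes R: "R1 \<in> UOp" "R2 \<in> UOp" and C: "C \<in> UOp" "\<forall>x. 0 \<le> C x"
    and d: "\<forall>x. U_inf (U_abs R1) C x = 0" "\<forall>x. U_inf (U_abs R2) C x = 0"
  shows "U_inf (U_abs (\<lambda>x. R1 x - R2 x)) C x = 0"
proof (rule order_antisym)
  have D: "(\<lambda>x. R1 x - R2 x) \<in> UOp" using R by (rule UOp_minus)
  have L: "U_abs R1 \<in> UOp" "U_abs R2 \<in> UOp" using R by (simp_all add: UOp_U_abs)
  have "U_inf (U_abs (\<lambda>x. R1 x - R2 x)) C x \<le> U_inf (\<lambda>x. U_abs R1 x + U_abs R2 x) C x"
    using U_abs_diff_le[OF R] D L C R by (intro U_inf_mono UOp_U_abs UOp_plus) auto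
  also have "\<dots> = U_inf C (\<lambda>x. U_abs R1 x + U_abs R2 x) x"
    using L C by (intro U_inf_commute UOp_plus)
  also have "\<dots> \<le> U_inf C (U_abs R1) x + U_inf C (U_abs R2) x"
    using C L R by (intro U_inf_add_le_add_U_inf) (auto intro: U_abs_nonneg)
  also have "\<dots> = 0" using d U_inf_commute[OF C(1) L(1)] U_inf_commute[OF C(1) L(2)] by simp
  finally show "U_inf (U_abs (\<lambda>x. R1 x - R2 x)) C x \<le> 0" .
  show "0 \<le> U_inf (U_abs (\<lambda>x. R1 x - R2 x)) C x"
    using D C by (intro U_inf_nonneg UOp_U_abs) (auto intro: U_abs_nonneg)
qed

lemma U_disj_diff:
  fixes R1 R2 Q :: "'e::vector_lattice \<Rightarrow> 'f::{vector_lattice, conditionally_complete_lattice}"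
  assumes R: "R1 \<in> UOp" "R2 \<in> UOp" and Q: "Q \<in> UOp" and d: "U_disj R1 Q" "U_disj R2 Q"
  shows "U_disj (\<lambda>x. R1 x - R2 x) Q"
  using d unfolding U_disj_iff[OF R(1) Q] U_disj_iff[OF R(2) Q] U_disj_iff[OF UOp_minus[OF R] Q]
  using U_inf_U_abs_diff_eq_0[OF R UOp_U_abs[OF Q]] U_abs_nonneg[OF Q] by blast

lemma U_disj_self:
  fixes R :: "'e::vector_lattice \<Rightarrow> 'f::{vector_lattice, conditionally_complete_lattice}"
  assumes R: "R \<in> UOp" and d: "U_disj R R"
  shows "R = (\<lambda>x. 0)"
proof
  fix x
  have "U_abs R x = 0" using d U_inf_self[OF UOp_U_abs[OF R]] unfolding U_disj_iff[OF R R] by simp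
  hence "R x \<le> 0" "- R x \<le> 0" using U_abs_ge[OF R, of x] U_abs_ge_neg[OF R, of x] by simp_all
  thus "R x = 0" by simp
qed

lemma band_decomposition_unique:
  fixes S T P1 P2 :: "'e::vector_lattice \<Rightarrow> 'f::{vector_lattice, conditionally_complete_lattice}"
  assumes S: "S \<in> UOp" and T: "T \<in> UOp"
    and P1: "P1 \<in> U_perpperp S" "(\<lambda>z. T z - P1 z) \<in> U_perp S"
    and P2: "P2 \<in> U_perpperp S" "(\<lambda>z. T z - P2 z) \<in> U_perp S"
  shows "P1 = P2"
proof -
  have U: "P1 \<in> UOp" "P2 \<in> UOp" using P1 P2 by (auto simp: U_perpperp_def)
  define D where "D = (\<lambda>x. P1 x - P2 x)"
  have DU: "D \<in> UOp" unfolding D_def using U by (rule UOp_minus)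
  have "(\<lambda>x. (T x - P2 x) - (T x - P1 x)) = D" by (simp add: D_def fun_eq_iff)
  moreover have "U_disj (\<lambda>x. (T x - P2 x) - (T x - P1 x)) S"
    using P1 P2
    by (intro U_disj_diff[OF UOp_minus[OF T U(2)] UOp_minus[OF T U(1)] S]) (auto simp: U_perp_def)
  ultimately have Dp: "D \<in> U_perp S" using DU by (simp add: U_perp_def)
  have "\<forall>Q\<in>U_perp S. U_disj D Q"
  proof
    fix Q assume Q: "Q \<in> U_perp S"
    hence QU: "Q \<in> UOp" by (simp add: U_perp_def)
    show "U_disj D Q" unfolding D_def using P1 P2 Q QU U
      by (intro U_disj_diff) (auto simp: U_perpperp_def)
  qed
  hence "U_disj D D" using Dp by blast
  hence "D = (\<lambda>x. 0)" using DU by (intro U_disj_self)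
  thus ?thesis by (simp add: D_def fun_eq_iff)
qed

lemma band_decomposition_unique_perp:
  fixes S T P1 P2 :: "'e::vector_lattice \<Rightarrow> 'f::{vector_lattice, conditionally_complete_lattice}"
  assumes S: "S \<in> UOp" and T: "T \<in> UOp"
    and P1: "P1 \<in> U_perp S" "(\<lambda>z. T z - P1 z) \<in> U_perpperp S"
    and P2: "P2 \<in> U_perp S" "(\<lambda>z. T z - P2 z) \<in> U_perpperp S"
  shows "P1 = P2"
proof -
  have "(\<lambda>z. T z - P1 z) = (\<lambda>z. T z - P2 z)"
  proof (rule band_decomposition_unique[OF S T])
    show "(\<lambda>z. T z - P1 z) \<in> U_perpperp S" "(\<lambda>z. T z - P2 z) \<in> U_perpperp S" by fact+
    show "(\<lambda>z. T z - (T z - P1 z)) \<in> U_perp S" "(\<lambda>z. T z - (T z - P2 z)) \<in> U_perp S"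
      using P1 P2 by simp_all
  qed
  thus ?thesis by (auto simp: fun_eq_iff)
qed


subsection \<open>The band projection onto \<open>{S}\<^sup>\<perp>\<^sup>\<perp>\<close>\<close>

locale UOp_pos_pair =
  fixes S T :: "'e::vector_lattice \<Rightarrow> 'f::{vector_lattice, conditionally_complete_lattice}"
  assumes S: "S \<in> UOp" and T: "T \<in> UOp"
    and S_nonneg: "\<forall>x. 0 \<le> S x" and T_nonneg: "\<forall>x. 0 \<le> T x"
begin

definition trunc :: "nat \<Rightarrow> 'e \<Rightarrow> 'f" where
  "trunc n = U_inf T (\<lambda>x. real n *\<^sub>R S x)"

definition proj :: "'e \<Rightarrow> 'f" where
  "proj x = Sup (range (\<lambda>n. trunc n x))"

abbreviation rest :: "'e \<Rightarrow> 'f" where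
  "rest \<equiv> \<lambda>x. T x - proj x"

lemma UOp_nS: "(\<lambda>x. real n *\<^sub>R S x) \<in> UOp"
  using S by (rule UOp_scaleR) simp

lemma nS_nonneg: "\<forall>x. 0 \<le> real n *\<^sub>R S x"
  using S_nonneg by (auto intro: scaleR_nonneg_nonneg)

lemma UOp_trunc: "trunc n \<in> UOp"
  unfolding trunc_def using T UOp_nS by (rule UOp_U_inf)

lemma trunc_nonneg: "0 \<le> trunc n x"
  unfolding trunc_def using T UOp_nS T_nonneg nS_nonneg by (rule U_inf_nonneg)

lemma trunc_le_T: "trunc n x \<le> T x"
  unfolding trunc_def using T UOp_nS by (rule U_inf_le1)

lemma trunc_le_nS: "trunc n x \<le> real n *\<^sub>R S x"
  unfolding trunc_def using T UOp_nS by (rule U_inf_le2)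

lemma trunc_le_Suc: "trunc n x \<le> trunc (Suc n) x"
  unfolding trunc_def
proof (rule U_inf_mono[OF T UOp_nS T UOp_nS])
  show "\<forall>x. T x \<le> T x" by simp
  show "\<forall>x. real n *\<^sub>R S x \<le> real (Suc n) *\<^sub>R S x" using S_nonneg by (auto intro: scaleR_right_mono)
qed

lemma incseq_trunc: "incseq (\<lambda>n. trunc n x)" by (rule incseq_SucI) (rule trunc_le_Suc)

lemma bdd_above_trunc: "bdd_above (range (\<lambda>n. trunc n x))"
  by (rule bdd_aboveI[of _ "T x"]) (auto intro: trunc_le_T)

lemma trunc_le_proj: "trunc n x \<le> proj x"
  unfolding proj_def by (rule cSUP_upper[OF UNIV_I bdd_above_trunc])

lemma proj_le_T: "proj x \<le> T x"
  unfolding proj_def by (rule cSUP_least) (auto intro: trunc_le_T)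

lemma proj_nonneg: "0 \<le> proj x"
  using trunc_nonneg[of 0 x] trunc_le_proj[of 0 x] by (rule order.trans)

lemma UOp_proj: "proj \<in> UOp"
  unfolding UOp_iff
proof (intro conjI allI impI order_bounded_opI)
  fix x y :: 'e assume d: "vdisj x y"
  have "proj (x + y) = Sup (range (\<lambda>n. trunc n x + trunc n y))"
    unfolding proj_def using UOp_add_vdisj[OF UOp_trunc d] by simp
  also have "\<dots> = proj x + proj y" unfolding proj_def
    by (rule cSUP_add_incseq[OF incseq_trunc incseq_trunc bdd_above_trunc bdd_above_trunc])
  finally show "proj (x + y) = proj x + proj y" .
next
  fix A :: "'e set" assume "order_bounded_set A"
  then obtain m M where "\<And>x. x \<in> A \<Longrightarrow> m \<le> T x \<and> T x \<le> M" using UOp_boundedE[OF T] by metis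
  thus "\<exists>m M. \<forall>x\<in>A. m \<le> proj x \<and> proj x \<le> M" using proj_nonneg proj_le_T by (metis order.trans)
qed

lemma UOp_rest: "rest \<in> UOp"
  using T UOp_proj by (rule UOp_minus)

lemma rest_nonneg: "0 \<le> rest x"
  using proj_le_T by simp

lemma U_inf_diff_trunc_S_le: "U_inf (\<lambda>x. T x - trunc n x) S x + trunc n x \<le> trunc (Suc n) x"
proof -
  have TQ: "(\<lambda>x. T x - trunc n x) \<in> UOp" using T UOp_trunc by (rule UOp_minus)
  let ?M = "\<lambda>x. U_inf (\<lambda>x. T x - trunc n x) S x + trunc n x"
  have "?M \<in> UOp" using TQ S UOp_trunc by (intro UOp_plus UOp_U_inf)
  moreover have "\<forall>x. ?M x \<le> T x" using U_inf_le1[OF TQ S] by (simp add: le_diff_eq)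
  moreover have "?M x \<le> real (Suc n) *\<^sub>R S x" for x
    using add_mono[OF U_inf_le2[OF TQ S] trunc_le_nS] by (simp add: algebra_simps)
  ultimately show ?thesis
    unfolding trunc_def[of "Suc n"] by (intro U_inf_greatest[OF T UOp_nS]) (auto simp: trunc_def)
qed

lemma U_inf_rest_S: "U_inf rest S x = 0"
proof (rule order_antisym)
  show "0 \<le> U_inf rest S x" using UOp_rest S rest_nonneg S_nonneg by (intro U_inf_nonneg) auto
  have "U_inf rest S x \<le> proj x - trunc n x" for n
  proof -
    have "U_inf rest S x \<le> U_inf (\<lambda>x. T x - trunc n x) S x"
      using UOp_rest UOp_minus[OF T UOp_trunc] S trunc_le_proj
      by (intro U_inf_mono) (auto intro: diff_left_mono)
    hence "U_inf rest S x + trunc n x \<le> U_inf (\<lambda>x. T x - trunc n x) S x + trunc n x"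
      by (rule add_right_mono)
    also have "\<dots> \<le> trunc (Suc n) x" by (rule U_inf_diff_trunc_S_le)
    also have "\<dots> \<le> proj x" by (rule trunc_le_proj)
    finally show ?thesis by (simp add: le_diff_eq)
  qed
  thus "U_inf rest S x \<le> 0"
    by (intro nonpos_if_le_SUP_diff[OF bdd_above_trunc[of x]]) (simp add: proj_def)
qed

lemma rest_perp: "rest \<in> U_perp S"
proof -
  have "U_disj rest S" unfolding U_disj_iff[OF UOp_rest S]
    using U_abs_pos[OF UOp_rest] rest_nonneg U_abs_pos[OF S S_nonneg] U_inf_rest_S by simp
  thus ?thesis using UOp_rest by (simp add: U_perp_def)
qed

context
  fixes a :: "'e \<Rightarrow> 'f"
  assumes a: "a \<in> UOp" "\<forall>x. 0 \<le> a x" and aS: "\<forall>x. U_inf a S x = 0"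
begin

lemma U_inf_nS_le_0: "U_inf a (\<lambda>x. real n *\<^sub>R S x) x \<le> 0"
proof (induction n arbitrary: x)
  case 0
  thus ?case using U_inf_le2[OF a(1) UOp_nS, of 0 x] by simp
next
  case (Suc n)
  have e: "(\<lambda>x. real (Suc n) *\<^sub>R S x) = (\<lambda>x. real n *\<^sub>R S x + S x)"
    by (simp add: algebra_simps fun_eq_iff)
  have "U_inf a (\<lambda>x. real n *\<^sub>R S x + S x) x
      \<le> U_inf a (\<lambda>x. real n *\<^sub>R S x) x + U_inf a S x"
    using a UOp_nS S nS_nonneg S_nonneg by (intro U_inf_add_le_add_U_inf) auto
  also have "\<dots> \<le> 0" using Suc aS by simp
  finally show ?case unfolding e .
qed

lemma U_inf_proj_le_0: "U_inf a proj x \<le> 0"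
proof -
  have "U_inf a proj x \<le> proj x - trunc n x" for n
  proof -
    have "U_inf a proj x = U_inf a (\<lambda>x. trunc n x + (proj x - trunc n x)) x" by simp
    also have "\<dots> \<le> U_inf a (trunc n) x + (proj x - trunc n x)"
      using a UOp_trunc UOp_minus[OF UOp_proj UOp_trunc] trunc_le_proj
      by (intro U_inf_add_nonneg_le) (auto simp: le_diff_eq)
    also have "U_inf a (trunc n) x \<le> U_inf a (\<lambda>x. real n *\<^sub>R S x) x"
      using a UOp_trunc UOp_nS trunc_le_nS by (intro U_inf_mono) auto
    hence "U_inf a (trunc n) x \<le> 0" using U_inf_nS_le_0[of n x] by simp
    finally show ?thesis by simp
  qed
  thus ?thesis by (intro nonpos_if_le_SUP_diff[OF bdd_above_trunc[of x]]) (simp add: proj_def)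
qed


end

lemma proj_perpperp: "proj \<in> U_perpperp S"
proof -
  have "U_disj proj Q" if Q: "Q \<in> U_perp S" for Q
  proof -
    have QU: "Q \<in> UOp" and QS: "U_disj Q S" using Q by (auto simp: U_perp_def)
    have aS: "\<forall>x. U_inf (U_abs Q) S x = 0"
      using QS unfolding U_disj_iff[OF QU S] U_abs_pos[OF S S_nonneg] .
    have a: "U_abs Q \<in> UOp" "\<forall>x. 0 \<le> U_abs Q x" using QU by (auto intro: UOp_U_abs U_abs_nonneg)
    have "U_inf proj (U_abs Q) x = 0" for x
      using U_inf_proj_le_0[OF a aS] U_inf_commute[OF a(1) UOp_proj] proj_nonneg
        U_inf_nonneg[OF a(1) UOp_proj a(2)] by (metis order_antisym)
    thus ?thesis using proj_nonneg by (simp add: U_disj_iff[OF UOp_proj QU] U_abs_pos[OF UOp_proj])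
  qed
  thus ?thesis using UOp_proj by (auto simp: U_perpperp_def)
qed

lemma pi_S_eq_proj: "pi_S S T = proj"
  unfolding pi_S_def
proof (rule the_equality)
  show "proj \<in> U_perpperp S \<and> rest \<in> U_perp S" using proj_perpperp rest_perp by simp
  fix P assume "P \<in> U_perpperp S \<and> (\<lambda>z. T z - P z) \<in> U_perp S"
  thus "P = proj" using band_decomposition_unique[OF S T, of P "proj"] proj_perpperp rest_perp
    by auto
qed

lemma pi_S_perp_eq_rest: "pi_S_perp S T = rest"
  unfolding pi_S_perp_def
proof (rule the_equality)
  have "(\<lambda>z. T z - rest z) = proj" by (simp add: fun_eq_iff)
  thus "rest \<in> U_perp S \<and> (\<lambda>z. T z - rest z) \<in> U_perpperp S" using proj_perpperp rest_perp by simp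
  fix P assume P: "P \<in> U_perp S \<and> (\<lambda>z. T z - P z) \<in> U_perpperp S"
  show "P = rest"
  proof (rule band_decomposition_unique_perp[OF S T])
    show "P \<in> U_perp S" "(\<lambda>z. T z - P z) \<in> U_perpperp S" using P by auto
    show "rest \<in> U_perp S" by (rule rest_perp)
    have "(\<lambda>z. T z - rest z) = proj" by (simp add: fun_eq_iff)
    thus "(\<lambda>z. T z - rest z) \<in> U_perpperp S" using proj_perpperp by simp
  qed
qed

subsection \<open>The formula for \<open>\<pi>\<^sub>S T\<close>\<close>

definition adm_values :: "'e \<Rightarrow> real \<Rightarrow> 'f set" where
  "adm_values x \<epsilon> = {\<rho> (T y) + (T x - \<rho> (T x)) | y \<rho>.
     y \<in> fragments x \<and> \<rho> \<in> band_projections \<and> \<rho> (S (x - y)) \<le> \<epsilon> *\<^sub>R S x}"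

definition adm_inf :: "'e \<Rightarrow> real \<Rightarrow> 'f" where
  "adm_inf x \<epsilon> = Inf (adm_values x \<epsilon>)"

lemma adm_valuesI:
  "y \<in> fragments x \<Longrightarrow> \<rho> \<in> band_projections \<Longrightarrow> \<rho> (S (x - y)) \<le> \<epsilon> *\<^sub>R S x
    \<Longrightarrow> \<rho> (T y) + (T x - \<rho> (T x)) \<in> adm_values x \<epsilon>"
  unfolding adm_values_def by blast

lemma S_diff_fragment_le: "y \<in> fragments x \<Longrightarrow> S (x - y) \<le> S x"
  using UOp_fragment[OF S, of y x] S_nonneg by (metis add_increasing order_refl)

lemma T_in_adm_values: "0 < \<epsilon> \<Longrightarrow> T x \<in> adm_values x \<epsilon>"
  using adm_valuesI[OF fragments_self id_band_projection, of x \<epsilon>] UOp_zero[OF S] S_nonneg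
  by (simp add: scaleR_nonneg_nonneg)

lemma adm_values_nonneg: "v \<in> adm_values x \<epsilon> \<Longrightarrow> 0 \<le> v"
  using band_projection_nonneg band_projection_le T_nonneg
  by (fastforce simp: adm_values_def intro: add_nonneg_nonneg)

lemma bdd_below_adm_values: "bdd_below (adm_values x \<epsilon>)"
  using adm_values_nonneg by (intro bdd_belowI[of _ 0]) auto

lemma adm_inf_lower: "v \<in> adm_values x \<epsilon> \<Longrightarrow> adm_inf x \<epsilon> \<le> v"
  unfolding adm_inf_def by (rule cInf_lower[OF _ bdd_below_adm_values])

lemma adm_inf_nonneg:
  assumes "0 < \<epsilon>"
  shows "0 \<le> adm_inf x \<epsilon>"
  unfolding adm_inf_def
proof (rule cInf_greatest)
  show "adm_values x \<epsilon> \<noteq> {}" using T_in_adm_values[OF assms] by auto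
qed (rule adm_values_nonneg)

lemma bdd_above_adm_inf: "bdd_above (adm_inf x ` {0<..})"
  using adm_inf_lower[OF T_in_adm_values] by (intro bdd_aboveI[of _ "T x"]) auto

lemma trunc_minus_le_adm_inf:
  assumes "0 < \<epsilon>"
  shows "trunc n x - (real n * \<epsilon>) *\<^sub>R S x \<le> adm_inf x \<epsilon>"
  unfolding adm_inf_def
proof (rule cInf_greatest)
  show "adm_values x \<epsilon> \<noteq> {}" using T_in_adm_values[OF assms] by auto
  fix v assume "v \<in> adm_values x \<epsilon>"
  then obtain y \<rho> where y: "y \<in> fragments x" and \<rho>: "\<rho> \<in> band_projections"
    and adm: "\<rho> (S (x - y)) \<le> \<epsilon> *\<^sub>R S x" and v: "v = \<rho> (T y) + (T x - \<rho> (T x))"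
    by (auto simp: adm_values_def)
  have Tx: "T x = T y + T (x - y)" using UOp_fragment[OF T y] .
  have "\<rho> (trunc n (x - y)) \<le> \<rho> (real n *\<^sub>R S (x - y))"
    using band_projection_mono[OF \<rho> trunc_le_nS] .
  also have "\<dots> = real n *\<^sub>R \<rho> (S (x - y))" by (rule band_projection_scaleR[OF \<rho>])
  also have "\<dots> \<le> real n *\<^sub>R (\<epsilon> *\<^sub>R S x)" using adm by (rule scaleR_left_mono) simp
  finally have on_band: "\<rho> (trunc n (x - y)) \<le> (real n * \<epsilon>) *\<^sub>R S x" by simp
  have "\<rho> (T (x - y) - trunc n (x - y)) \<le> T (x - y) - trunc n (x - y)"
    using trunc_le_T by (intro band_projection_le[OF \<rho>]) simp
  also have "\<dots> \<le> T x - trunc n x"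
    using Tx UOp_fragment[OF UOp_trunc y] trunc_le_T[of n y] by (simp add: algebra_simps)
  finally have bound: "\<rho> (T (x - y)) \<le> (real n * \<epsilon>) *\<^sub>R S x + (T x - trunc n x)"
    using on_band band_projection_add[OF \<rho>, of "trunc n (x - y)" "T (x - y) - trunc n (x - y)"]
    by (simp add: add_mono)
  have v': "v = T x - \<rho> (T (x - y))"
    using v Tx band_projection_add[OF \<rho>, of "T y" "T (x - y)"] by simp
  show "trunc n x - (real n * \<epsilon>) *\<^sub>R S x \<le> v"
    unfolding v' using bound by (simp add: algebra_simps)
qed

lemma proj_le_SUP_adm_inf: "proj x \<le> Sup (adm_inf x ` {0<..})"
  unfolding proj_def
proof (rule cSUP_least)
  fix n
  define d where "d = trunc n x - Sup (adm_inf x ` {0<..})"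
  have "d \<le> t *\<^sub>R S x" if t: "0 < t" for t :: real
  proof (cases "n = 0")
    case True
    have "0 \<le> Sup (adm_inf x ` {0<..})"
      using adm_inf_nonneg[of 1 x] cSUP_upper[OF _ bdd_above_adm_inf, of 1]
      by (auto intro: order.trans)
    hence "d \<le> 0" using True trunc_le_nS[of n x] by (simp add: d_def)
    thus ?thesis using t S_nonneg by (metis order.trans scaleR_nonneg_nonneg less_imp_le)
  next
    case False
    hence \<epsilon>: "0 < t / real n" "real n * (t / real n) = t" using t by simp_all
    have "trunc n x - t *\<^sub>R S x \<le> adm_inf x (t / real n)"
      using trunc_minus_le_adm_inf[OF \<epsilon>(1), of n x] \<epsilon>(2) by simp
    also have "\<dots> \<le> Sup (adm_inf x ` {0<..})" using \<epsilon>(1)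
      by (intro cSUP_upper[OF _ bdd_above_adm_inf]) simp
    finally show ?thesis by (simp add: d_def algebra_simps)
  qed
  hence "d \<le> 0" using S_nonneg by (intro nonpos_if_le_scaleR_all_pos[of "S x"]) auto
  thus "trunc n x \<le> Sup (adm_inf x ` {0<..})" by (simp add: d_def)
qed simp

lemma nonpos_if_le_rest_plus_S:
  assumes "\<And>y. y \<in> fragments x \<Longrightarrow> c \<le> rest y + S (x - y)"
  shows "c \<le> 0"
proof -
  have "c \<le> U_inf rest S x" unfolding U_inf_def
    using assms
    by (intro cInf_greatest[OF frag_sums_nonempty[OF UOp_rest S]]) (auto simp: frag_sums_def)
  thus ?thesis using U_inf_rest_S by simp
qed

lemma band_projection_excess_le_rest:
  assumes "0 < \<epsilon>" "y \<in> fragments x" and \<rho>: "\<rho> \<in> band_projections"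
    and "\<rho> (S (x - y)) \<le> \<epsilon> *\<^sub>R S x"
  shows "\<rho> (pprt (adm_inf x \<epsilon> - proj x)) \<le> rest y"
proof -
  let ?R = "\<rho> (rest y) + (rest x - \<rho> (rest x))"
  have "adm_inf x \<epsilon> \<le> \<rho> (T y) + (T x - \<rho> (T x))"
    using assms by (intro adm_inf_lower adm_valuesI)
  also have "\<dots> = proj x + (rest x - \<rho> (T (x - y)))"
    using UOp_fragment[OF T assms(2)] band_projection_add[OF \<rho>, of "T y" "T (x - y)"] by simp
  also have "\<dots> \<le> proj x + (rest x - \<rho> (rest (x - y)))"
    using proj_nonneg by (simp add: band_projection_mono[OF \<rho>])
  also have "\<rho> (rest x) = \<rho> (rest y) + \<rho> (rest (x - y))"
    by (subst UOp_fragment[OF UOp_rest assms(2)]) (rule band_projection_add[OF \<rho>])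
  hence "rest x - \<rho> (rest (x - y)) = ?R" by (simp add: algebra_simps)
  finally have "pprt (adm_inf x \<epsilon> - proj x) \<le> ?R"
    using band_projection_nonneg[OF \<rho> rest_nonneg] band_projection_le[OF \<rho> rest_nonneg]
    by (simp add: pprt_def add_nonneg_nonneg diff_le_eq add.commute)
  hence "\<rho> (pprt (adm_inf x \<epsilon> - proj x)) \<le> \<rho> ?R" by (rule band_projection_mono[OF \<rho>])
  also have "\<rho> ?R = \<rho> (rest y)"
    using band_projection_add[OF \<rho>] band_projection_idem[OF \<rho>] band_projection_compl[OF \<rho>] by simp
  also have "\<dots> \<le> rest y" using band_projection_le[OF \<rho> rest_nonneg] .
  finally show ?thesis .
qed

lemma excess_scaled_le:
  assumes \<epsilon>: "0 < \<epsilon>" and y: "y \<in> fragments x"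
  shows "(\<epsilon> / (\<epsilon> + 1)) *\<^sub>R inf (pprt (adm_inf x \<epsilon> - proj x)) (S x) \<le> rest y + S (x - y)"
proof -
  define b where "b = pprt (adm_inf x \<epsilon> - proj x)"
  define c where "c = inf b (S x)"
  \<comment> \<open>\<open>\<rho>\<close> projects onto the band where \<open>\<epsilon> S x\<close> dominates \<open>S (x - y)\<close>\<close>
  obtain \<rho> where \<rho>: "\<rho> \<in> band_projections" and adm: "\<rho> (S (x - y)) \<le> \<epsilon> *\<^sub>R S x"
    and off: "\<epsilon> *\<^sub>R S x - \<rho> (\<epsilon> *\<^sub>R S x) \<le> S (x - y)"
    using band_projection_compare[of "S (x - y)" "\<epsilon> *\<^sub>R S x"] \<epsilon> S_nonneg
    by (auto simp: scaleR_nonneg_nonneg)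
  have rc: "\<rho> c \<le> rest y"
    using band_projection_mono[OF \<rho>, of c b] band_projection_excess_le_rest[OF \<epsilon> y \<rho> adm]
    by (simp add: c_def b_def)
  have "0 \<le> S x - c" unfolding c_def by (simp only: diff_ge_0_iff_ge inf_le2)
  hence "c - \<rho> c \<le> S x - \<rho> (S x)"
    using band_projection_le[OF \<rho>, of "S x - c"] band_projection_diff[OF \<rho>, of "S x" c]
    by (simp add: algebra_simps)
  hence "\<epsilon> *\<^sub>R (c - \<rho> c) \<le> \<epsilon> *\<^sub>R (S x - \<rho> (S x))"
    using \<epsilon> by (intro scaleR_left_mono) auto
  also have "\<dots> \<le> S (x - y)"
    using off by (simp add: band_projection_scaleR[OF \<rho>] scaleR_diff_right)
  finally have "\<epsilon> *\<^sub>R (c - \<rho> c) \<le> S (x - y)" .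
  moreover have "\<epsilon> *\<^sub>R \<rho> c \<le> \<epsilon> *\<^sub>R rest y"
    using rc \<epsilon> by (intro scaleR_left_mono) auto
  ultimately have "\<epsilon> *\<^sub>R \<rho> c + \<epsilon> *\<^sub>R (c - \<rho> c) \<le> \<epsilon> *\<^sub>R rest y + S (x - y)"
    by (rule add_mono[rotated])
  hence "\<epsilon> *\<^sub>R c \<le> \<epsilon> *\<^sub>R rest y + S (x - y)" by (simp add: scaleR_diff_right)
  also have "\<dots> \<le> (\<epsilon> + 1) *\<^sub>R rest y + (\<epsilon> + 1) *\<^sub>R S (x - y)"
    using \<epsilon> rest_nonneg[of y] S_nonneg scaleR_right_mono[of 1 "\<epsilon> + 1" "S (x - y)"]
    by (intro add_mono scaleR_right_mono) auto
  also have "\<dots> = (\<epsilon> + 1) *\<^sub>R (rest y + S (x - y))" by (rule scaleR_add_right[symmetric])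
  finally have "inverse (\<epsilon> + 1) *\<^sub>R (\<epsilon> *\<^sub>R c)
      \<le> inverse (\<epsilon> + 1) *\<^sub>R ((\<epsilon> + 1) *\<^sub>R (rest y + S (x - y)))"
    using \<epsilon> by (intro scaleR_left_mono) auto
  thus ?thesis using \<epsilon> by (simp add: divide_inverse_commute b_def c_def)
qed

lemma excess_inf_S_eq_0:
  assumes \<epsilon>: "0 < \<epsilon>"
  shows "inf (pprt (adm_inf x \<epsilon> - proj x)) (S x) = 0"
proof -
  define c where "c = inf (pprt (adm_inf x \<epsilon> - proj x)) (S x)"
  have "(\<epsilon> / (\<epsilon> + 1)) *\<^sub>R c \<le> 0"
    unfolding c_def using excess_scaled_le[OF \<epsilon>] by (rule nonpos_if_le_rest_plus_S)
  moreover have "0 < \<epsilon> / (\<epsilon> + 1)" using \<epsilon> by simp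
  ultimately have "c \<le> 0" by (auto simp: scaleR_le_0_iff)
  moreover have "0 \<le> c" using S_nonneg by (simp add: c_def)
  ultimately show ?thesis unfolding c_def by (rule order_antisym)
qed

lemma adm_inf_le_proj:
  assumes \<epsilon>: "0 < \<epsilon>"
  shows "adm_inf x \<epsilon> \<le> proj x"
proof -
  define b where "b = pprt (adm_inf x \<epsilon> - proj x)"
  \<comment> \<open>the projection annihilating \<open>S x\<close> fixes \<open>b\<close> and makes every fragment admissible\<close>
  obtain \<rho> where \<rho>: "\<rho> \<in> band_projections" "\<rho> (S x) = 0" and id: "\<And>z. vdisj z (S x) \<Longrightarrow> \<rho> z = z"
    using band_projection_vanishing[of "S x"] S_nonneg by blast
  have "\<rho> b = b"
    using id excess_inf_S_eq_0[OF \<epsilon>, of x] S_nonneg by (simp add: b_def vdisj_nonneg_iff)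
  have "b \<le> rest y + S (x - y)" if y: "y \<in> fragments x" for y
  proof -
    have "\<rho> (S (x - y)) \<le> \<epsilon> *\<^sub>R S x"
      using band_projection_mono[OF \<rho>(1) S_diff_fragment_le[OF y]] \<rho>(2) \<epsilon> S_nonneg
      by (metis order.trans less_imp_le scaleR_nonneg_nonneg)
    hence "\<rho> b \<le> rest y" unfolding b_def by (rule band_projection_excess_le_rest[OF \<epsilon> y \<rho>(1)])
    thus ?thesis using \<open>\<rho> b = b\<close> S_nonneg by (simp add: add_increasing2)
  qed
  hence "b \<le> 0" by (rule nonpos_if_le_rest_plus_S)
  thus ?thesis by (simp add: b_def pprt_def)
qed

lemma proj_eq_SUP_adm_inf: "proj x = Sup (adm_inf x ` {0<..})"
  using proj_le_SUP_adm_inf adm_inf_le_proj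
  by (intro order_antisym cSUP_least) auto

definition perp_values :: "'e \<Rightarrow> real \<Rightarrow> 'f set" where
  "perp_values x \<epsilon> = {\<rho> (T y) | y \<rho>.
     y \<in> fragments x \<and> \<rho> \<in> band_projections \<and> \<rho> (S y) \<le> \<epsilon> *\<^sub>R S x}"

text \<open>Trading the fragment \<open>y\<close> for \<open>x - y\<close> turns admissible values into their reflections.\<close>

lemma perp_values_eq: "perp_values x \<epsilon> = (\<lambda>v. T x - v) ` adm_values x \<epsilon>"
proof (intro set_eqI iffI)
  fix w assume "w \<in> perp_values x \<epsilon>"
  then obtain y \<rho> where y: "y \<in> fragments x" and \<rho>: "\<rho> \<in> band_projections"
    and adm: "\<rho> (S y) \<le> \<epsilon> *\<^sub>R S x" and w: "w = \<rho> (T y)"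
    by (auto simp: perp_values_def)
  have "w = T x - (\<rho> (T (x - y)) + (T x - \<rho> (T x)))"
    using w UOp_fragment[OF T y] band_projection_add[OF \<rho>, of "T y" "T (x - y)"]
    by (simp add: algebra_simps)
  moreover have "\<rho> (T (x - y)) + (T x - \<rho> (T x)) \<in> adm_values x \<epsilon>"
    using adm_valuesI[OF fragments_compl[OF y] \<rho>] adm by simp
  ultimately show "w \<in> (\<lambda>v. T x - v) ` adm_values x \<epsilon>" by blast
next
  fix w assume "w \<in> (\<lambda>v. T x - v) ` adm_values x \<epsilon>"
  then obtain y \<rho> where y: "y \<in> fragments x" and \<rho>: "\<rho> \<in> band_projections"
    and adm: "\<rho> (S (x - y)) \<le> \<epsilon> *\<^sub>R S x" and w: "w = T x - (\<rho> (T y) + (T x - \<rho> (T x)))"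
    by (auto simp: adm_values_def)
  have "w = \<rho> (T (x - y))"
    using w UOp_fragment[OF T y] band_projection_add[OF \<rho>, of "T y" "T (x - y)"] by simp
  thus "w \<in> perp_values x \<epsilon>"
    unfolding perp_values_def using fragments_compl[OF y] \<rho> adm by auto
qed

lemma rest_eq_INF_SUP_perp_values: "rest x = Inf ((\<lambda>\<epsilon>. Sup (perp_values x \<epsilon>)) ` {0<..})"
proof -
  have "Sup (perp_values x \<epsilon>) = T x - adm_inf x \<epsilon>" if "0 < \<epsilon>" for \<epsilon> :: real
    unfolding perp_values_eq adm_inf_def
    using T_in_adm_values[OF that] by (intro cSup_image_diff bdd_below_adm_values) auto
  hence "(\<lambda>\<epsilon>. Sup (perp_values x \<epsilon>)) ` {0<..} = (\<lambda>v. T x - v) ` (adm_inf x ` {0<..})"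
    by (auto simp: image_image intro!: image_cong)
  thus ?thesis
    using cInf_image_diff[OF _ bdd_above_adm_inf, of x "T x"] proj_eq_SUP_adm_inf by simp
qed


end

theorem corollary3p5:
  fixes S T :: "'e::vector_lattice \<Rightarrow> 'f::{vector_lattice, conditionally_complete_lattice}"
    and x :: 'e
  assumes "S \<in> UOp_pos" and "T \<in> UOp_pos"
  shows "(pi_S S T x =
           Sup ((\<lambda>\<epsilon>::real. Inf {\<rho> (T y) + (T x - \<rho> (T x)) | y \<rho>.
                   y \<in> fragments x \<and> \<rho> \<in> band_projections
                   \<and> \<rho> (S (x - y)) \<le> \<epsilon> *\<^sub>R S x}) ` {0<..})) \<and>
        (pi_S_perp S T x =
           Inf ((\<lambda>\<epsilon>::real. Sup {\<rho> (T y) | y \<rho>.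
                   y \<in> fragments x \<and> \<rho> \<in> band_projections
                   \<and> \<rho> (S y) \<le> \<epsilon> *\<^sub>R S x}) ` {0<..}))"
proof -
  interpret UOp_pos_pair S T
    using assms by unfold_locales (simp_all add: UOp_pos_def)
  show ?thesis
    using pi_S_eq_proj proj_eq_SUP_adm_inf pi_S_perp_eq_rest rest_eq_INF_SUP_perp_values
    by (simp add: adm_inf_def adm_values_def perp_values_def)
qed

end
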